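(* The action of $O_d(\mathbb R)$ on $U_d(\mathbb R)\subset\mathbb R^d\oplus\mathfrak{so}(d,\mathbb R)$ is free.
   Context: Fix $d\ge2$. $V=\mathbb C^d\oplus\mathfrak{so}(d,\mathbb C)$, elements $(v,M)$ with $v=(c_1,\dots,c_d)^\top$, $M$ skew-symmetric, $M_{ij}=c_{ij}=-M_{ji}$ for $i<j$; $O_d(\mathbb K)=\{A\in\mathbb K^{d\times d}:AA^\top=I\}$ acts by $A\cdot(v,M)=(Av,AMA^\top)$. $L^{(1)}=\{c_1=\dots=c_{d-1}=0\}$, $L^{(i)}=\{(v,M)\in L^{(i-1)}:c_{k(d-i+2)}=0,\ 1\le k\le d-i\}$ for $2\le i\le d-1$. $f_1=\sum c_i^2$; for $2\le i\le d-1$, $f_i$ is the $O_d(\mathbb C)$-invariant rational function on $V$ with $f_i|_{L^{(i-1)}}=c_{1(d-i+2)}^2+\dots+c_{(d-i+1)(d-i+2)}^2$; $f_d$ is the invariant rational function with $f_d|_{L^{(d-1)}}=c_{12}^2$ (these exist and are unique). $U_d(\mathbb C)$ is the set of points of $V$ in the domain of all $f_k$ with $\prod_kf_k\neq0$, and $U_d(\mathbb R)=U_d(\mathbb C)\cap(\mathbb R^d\oplus\mathfrak{so}(d,\mathbb R))$. An action is free if all stabilizers are trivial. *)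

theory Defs
  imports Complex_Main
begin

text \<open>Points of V = C^d + so(d): a pair (v, M) with v indexed by 1..d and
  M a skew-symmetric d x d matrix indexed by 1..d (zero outside the index range).\<close>
type_synonym 'a pt = "(nat \<Rightarrow> 'a) \<times> (nat \<Rightarrow> nat \<Rightarrow> 'a)"

definition Vsp :: "nat \<Rightarrow> ('a::comm_ring_1) pt set" where
  "Vsp d = {(v, M). (\<forall>i. i \<notin> {1..d} \<longrightarrow> v i = 0)
      \<and> (\<forall>i j. (i \<notin> {1..d} \<or> j \<notin> {1..d}) \<longrightarrow> M i j = 0)
      \<and> (\<forall>i j. M i j = - M j i)}"

definition Orth :: "nat \<Rightarrow> (nat \<Rightarrow> nat \<Rightarrow> 'a::comm_ring_1) set" where
  "Orth d = {A. (\<forall>i j. (i \<notin> {1..d} \<or> j \<notin> {1..d}) \<longrightarrow> A i j = 0)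
      \<and> (\<forall>i\<in>{1..d}. \<forall>j\<in>{1..d}. (\<Sum>k=1..d. A i k * A j k) = (if i = j then 1 else 0))}"

definition act :: "nat \<Rightarrow> (nat \<Rightarrow> nat \<Rightarrow> 'a::comm_ring_1) \<Rightarrow> 'a pt \<Rightarrow> 'a pt" where
  "act d A x = ((\<lambda>i. \<Sum>j=1..d. A i j * fst x j),
               (\<lambda>i j. \<Sum>k=1..d. \<Sum>l=1..d. A i k * snd x k l * A j l))"

definition idm :: "nat \<Rightarrow> nat \<Rightarrow> nat \<Rightarrow> 'a::comm_ring_1" where
  "idm d = (\<lambda>i j. if i = j \<and> i \<in> {1..d} then 1 else 0)"

inductive_set polyfun :: "('a::comm_ring_1 pt \<Rightarrow> 'a) set" where
  pconst: "(\<lambda>x. c) \<in> polyfun"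
| pvc: "(\<lambda>x. fst x i) \<in> polyfun"
| pmc: "(\<lambda>x. snd x i j) \<in> polyfun"
| padd: "p \<in> polyfun \<Longrightarrow> q \<in> polyfun \<Longrightarrow> (\<lambda>x. p x + q x) \<in> polyfun"
| pmult: "p \<in> polyfun \<Longrightarrow> q \<in> polyfun \<Longrightarrow> (\<lambda>x. p x * q x) \<in> polyfun"

definition nonzero_on :: "'a pt set \<Rightarrow> ('a pt \<Rightarrow> 'a::comm_ring_1) \<Rightarrow> bool" where
  "nonzero_on S q = (\<exists>x\<in>S. q x \<noteq> 0)"

text \<open>(p, q) is a representative p/q of a rational function on V.\<close>
definition ratrep :: "nat \<Rightarrow> ('a pt \<Rightarrow> 'a::comm_ring_1) \<Rightarrow> ('a pt \<Rightarrow> 'a) \<Rightarrow> bool" where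
  "ratrep d p q = (p \<in> polyfun \<and> q \<in> polyfun \<and> nonzero_on (Vsp d) q)"

definition ratequiv :: "nat \<Rightarrow> ('a pt \<Rightarrow> 'a::comm_ring_1) \<Rightarrow> ('a pt \<Rightarrow> 'a)
    \<Rightarrow> ('a pt \<Rightarrow> 'a) \<Rightarrow> ('a pt \<Rightarrow> 'a) \<Rightarrow> bool" where
  "ratequiv d p q p' q' = (\<forall>x\<in>Vsp d. p x * q' x = p' x * q x)"

definition invariant :: "nat \<Rightarrow> ('a pt \<Rightarrow> 'a::comm_ring_1) \<Rightarrow> ('a pt \<Rightarrow> 'a) \<Rightarrow> bool" where
  "invariant d p q = (\<forall>A\<in>Orth d. \<forall>x\<in>Vsp d. p (act d A x) * q x = p x * q (act d A x))"

definition restricts_to :: "'a pt set \<Rightarrow> ('a pt \<Rightarrow> 'a::comm_ring_1) \<Rightarrow> ('a pt \<Rightarrow> 'a)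
    \<Rightarrow> ('a pt \<Rightarrow> 'a) \<Rightarrow> bool" where
  "restricts_to S p q g = (nonzero_on S q \<and> (\<forall>x\<in>S. p x = g x * q x))"

text \<open>The slices L^(i), 1 <= i <= d-1 (L^(0) := V is only an auxiliary value).\<close>
fun Lsl :: "nat \<Rightarrow> nat \<Rightarrow> complex pt set" where
  "Lsl d 0 = Vsp d"
| "Lsl d (Suc i) =
     (if i = 0 then {x \<in> Vsp d. \<forall>k\<in>{1..d-1}. fst x k = 0}
      else Lsl d i \<inter> {x. \<forall>k\<in>{1..d - Suc i}. snd x k (d - Suc i + 2) = 0})"

text \<open>The prescribed values: f_1 = sum c_i^2 on V; for 2 <= i <= d-1 the restriction
  of f_i to L^(i-1) is c_{1(d-i+2)}^2 + ... + c_{(d-i+1)(d-i+2)}^2; for i = d this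
  formula reads c_12^2, which is the prescribed restriction of f_d to L^(d-1).\<close>
definition gfun :: "nat \<Rightarrow> nat \<Rightarrow> complex pt \<Rightarrow> complex" where
  "gfun d i = (if i = 1 then (\<lambda>x. \<Sum>k=1..d. (fst x k)^2)
               else (\<lambda>x. \<Sum>k=1..d-i+1. (snd x k (d-i+2))^2))"

definition frep :: "nat \<Rightarrow> nat \<Rightarrow> ((complex pt \<Rightarrow> complex) \<times> (complex pt \<Rightarrow> complex)) set" where
  "frep d i = {(p, q). ratrep d p q \<and>
     (if i = 1 then ratequiv d p q (gfun d 1) (\<lambda>x. 1)
      else (\<exists>p' q'. ratrep d p' q' \<and> ratequiv d p q p' q' \<and> invariant d p' q'
                    \<and> restricts_to (Lsl d (i - 1)) p' q' (gfun d i)))}"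

text \<open>U_d(C): points in the domain of every f_k (some representative has nonzero
  denominator there) with prod f_k nonzero.\<close>
definition Ucx :: "nat \<Rightarrow> complex pt set" where
  "Ucx d = {x \<in> Vsp d. \<forall>k\<in>{1..d}. \<exists>(p, q)\<in>frep d k. q x \<noteq> 0 \<and> p x \<noteq> 0}"

definition embed :: "real pt \<Rightarrow> complex pt" where
  "embed x = ((\<lambda>i. complex_of_real (fst x i)), (\<lambda>i j. complex_of_real (snd x i j)))"

definition Ure :: "nat \<Rightarrow> real pt set" where
  "Ure d = {x. embed x \<in> Ucx d}"

end

(*
  Householder reflections move every real point of V into each slice L^(k) without leaving
  its O_d(R)-orbit. Suppose A fixes x in U_d(R). The value f_1(x) makes the last coordinate of
  the vector part of any representative nonzero, and f_(k+1)(x) makes the subdiagonal entry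
  (d-k, d-k+1) of the matrix part of any representative in L^(k+1) nonzero; inductively, two
  representatives in L^(k) differ by an orthogonal matrix whose last k columns are signed unit
  vectors, which is what makes f_(k+1) computable on any representative. In L^(d) a
  representative z then has all these entries nonzero, so the conjugate of A fixing z is
  diagonal with entries +-1, the last one +1 and all equal along the nonzero subdiagonal.
  Since f_(k+1) is only given by representatives p/q, its value at a representative of x is
  reached by approximating x with points B z whose slice part avoids the zeros of q and
  passing to the limit with the compactness of O_d(R).
*)

theory Submission
  imports Defs "Jordan_Normal_Form.Determinant" "HOL-Computational_Algebra.Polynomial"
begin

section \<open>Matrices indexed by \<open>{1..d}\<close>\<close>

definition mat_mul :: "nat \<Rightarrow> (nat \<Rightarrow> nat \<Rightarrow> 'a::comm_ring_1) \<Rightarrow> (nat \<Rightarrow> nat \<Rightarrow> 'a) \<Rightarrow> nat \<Rightarrow> nat \<Rightarrow> 'a"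
  where "mat_mul d A B = (\<lambda>i j. \<Sum>k=1..d. A i k * B k j)"

definition mat_transpose :: "(nat \<Rightarrow> nat \<Rightarrow> 'a) \<Rightarrow> nat \<Rightarrow> nat \<Rightarrow> 'a"
  where "mat_transpose A = (\<lambda>i j. A j i)"

definition mat_vec :: "nat \<Rightarrow> (nat \<Rightarrow> nat \<Rightarrow> 'a::comm_ring_1) \<Rightarrow> (nat \<Rightarrow> 'a) \<Rightarrow> nat \<Rightarrow> 'a"
  where "mat_vec d A v = (\<lambda>i. \<Sum>j=1..d. A i j * v j)"

definition mat_supp :: "nat \<Rightarrow> (nat \<Rightarrow> nat \<Rightarrow> 'a::zero) \<Rightarrow> bool"
  where "mat_supp d A \<longleftrightarrow> (\<forall>i j. i \<notin> {1..d} \<or> j \<notin> {1..d} \<longrightarrow> A i j = 0)"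

definition vec_supp :: "nat \<Rightarrow> (nat \<Rightarrow> 'a::zero) \<Rightarrow> bool"
  where "vec_supp d v \<longleftrightarrow> (\<forall>i. i \<notin> {1..d} \<longrightarrow> v i = 0)"

lemma sum_eq_single:
  fixes f :: "nat \<Rightarrow> 'a::comm_monoid_add"
  assumes "a \<in> {1..d}" "\<And>k. k \<in> {1..d} \<Longrightarrow> k \<noteq> a \<Longrightarrow> f k = 0"
  shows "(\<Sum>k=1..d. f k) = f a"
proof -
  have "(\<Sum>k=1..d. f k) = f a + (\<Sum>k\<in>{1..d} - {a}. f k)"
    using assms(1) by (simp add: sum.remove)
  also have "(\<Sum>k\<in>{1..d} - {a}. f k) = 0"
    using assms(2) by (intro sum.neutral) auto
  finally show ?thesis by simp
qed

lemma mat_transpose_transpose [simp]: "mat_transpose (mat_transpose A) = A"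
  by (simp add: mat_transpose_def)

lemma mat_transpose_idm [simp]: "mat_transpose (idm d) = (idm d :: nat \<Rightarrow> nat \<Rightarrow> 'a::comm_ring_1)"
  by (auto simp: mat_transpose_def idm_def intro!: ext)

lemma idm_sym: "idm d a b = idm d b a"
  by (auto simp: idm_def)

lemma mat_supp_transpose: "mat_supp d A \<Longrightarrow> mat_supp d (mat_transpose A)"
  by (auto simp: mat_supp_def mat_transpose_def)

lemma mat_supp_idm: "mat_supp d (idm d)"
  by (auto simp: mat_supp_def idm_def)

lemma mat_supp_mul: "mat_supp d A \<Longrightarrow> mat_supp d B \<Longrightarrow> mat_supp d (mat_mul d A B)"
  by (auto simp: mat_supp_def mat_mul_def)

lemma mat_mul_assoc: "mat_mul d (mat_mul d A B) C = mat_mul d A (mat_mul d B C)"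
  unfolding mat_mul_def
  by (simp add: sum_distrib_left sum_distrib_right mult.assoc) (rule ext, rule ext, rule sum.swap)

lemma mat_transpose_mul: "mat_transpose (mat_mul d A B) = mat_mul d (mat_transpose B) (mat_transpose A)"
  by (auto simp: mat_transpose_def mat_mul_def mult.commute)

lemma sum_idm_right: "(\<Sum>k=1..d. f k * idm d k j) = (if j \<in> {1..d} then f j else (0::'a::comm_ring_1))"
proof -
  have "(\<Sum>k=1..d. f k * idm d k j) = (\<Sum>k=1..d. if k = j then f k else 0)"
    by (rule sum.cong) (auto simp: idm_def)
  then show ?thesis by simp
qed

lemma sum_idm_left: "(\<Sum>k=1..d. idm d i k * f k) = (if i \<in> {1..d} then f i else (0::'a::comm_ring_1))"
  using sum_idm_right[of "\<lambda>k. f k" d i] by (simp add: idm_sym mult.commute)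

lemma mat_mul_idm_left: "mat_supp d B \<Longrightarrow> mat_mul d (idm d) B = B"
  unfolding mat_mul_def sum_idm_left by (auto simp: mat_supp_def intro!: ext)

lemma mat_mul_idm_right: "mat_supp d B \<Longrightarrow> mat_mul d B (idm d) = B"
  unfolding mat_mul_def sum_idm_right by (auto simp: mat_supp_def intro!: ext)

lemma mat_vec_mat_vec: "mat_vec d A (mat_vec d B v) = mat_vec d (mat_mul d A B) v"
  unfolding mat_vec_def mat_mul_def
  by (simp add: sum_distrib_left sum_distrib_right mult.assoc) (rule ext, rule sum.swap)

lemma mat_vec_idm: "vec_supp d v \<Longrightarrow> mat_vec d (idm d) v = v"
  unfolding mat_vec_def sum_idm_left by (auto simp: vec_supp_def)

lemma mat_vec_add: "mat_vec d A (\<lambda>i. u i + v i) = (\<lambda>i. mat_vec d A u i + mat_vec d A v i)"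
  by (simp add: mat_vec_def distrib_left sum.distrib)

text \<open>Transfer to \<open>Jordan_Normal_Form\<close> matrices, whose determinant theory shows that
  a one-sided inverse is two-sided.\<close>

definition to_mat :: "nat \<Rightarrow> (nat \<Rightarrow> nat \<Rightarrow> 'a) \<Rightarrow> 'a mat"
  where "to_mat d X = mat d d (\<lambda>(i, j). X (Suc i) (Suc j))"

lemma to_mat_mul: "to_mat d X * to_mat d Y = to_mat d (mat_mul d X Y)"
proof (rule eq_matI)
  fix i j assume "i < dim_row (to_mat d (mat_mul d X Y))" "j < dim_col (to_mat d (mat_mul d X Y))"
  then have ij: "i < d" "j < d" by (auto simp: to_mat_def)
  have "(to_mat d X * to_mat d Y) $$ (i, j) = (\<Sum>k\<in>{0..<d}. X (Suc i) (Suc k) * Y (Suc k) (Suc j))"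
    using ij by (simp add: to_mat_def scalar_prod_def)
  also have "\<dots> = (\<Sum>k\<in>{Suc 0..<Suc d}. X (Suc i) k * Y k (Suc j))"
    by (rule sum.shift_bounds_Suc_ivl[symmetric])
  also have "{Suc 0..<Suc d} = {1..d}" by auto
  finally show "(to_mat d X * to_mat d Y) $$ (i, j) = to_mat d (mat_mul d X Y) $$ (i, j)"
    using ij by (simp add: to_mat_def mat_mul_def)
qed (auto simp: to_mat_def)

lemma to_mat_idm: "to_mat d (idm d) = 1\<^sub>m d"
  by (rule eq_matI) (auto simp: to_mat_def idm_def)

lemma to_mat_inj: "mat_supp d X \<Longrightarrow> mat_supp d Y \<Longrightarrow> to_mat d X = to_mat d Y \<Longrightarrow> X = Y"
proof (intro ext)
  fix i j assume X: "mat_supp d X" and Y: "mat_supp d Y" and eq: "to_mat d X = to_mat d Y"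
  show "X i j = Y i j"
  proof (cases "i \<in> {1..d} \<and> j \<in> {1..d}")
    case True
    then obtain i' j' where "i = Suc i'" "j = Suc j'" "i' < d" "j' < d"
      by (metis Suc_le_eq atLeastAtMost_iff not0_implies_Suc not_one_le_zero)
    then show ?thesis using arg_cong[OF eq, of "\<lambda>m. m $$ (i', j')"] by (simp add: to_mat_def)
  next
    case False
    then show ?thesis using X Y by (auto simp: mat_supp_def)
  qed
qed

lemma mat_mul_right_inverse_imp_left:
  fixes A B :: "nat \<Rightarrow> nat \<Rightarrow> 'a::field"
  assumes "mat_supp d A" "mat_supp d B" "mat_mul d A B = idm d"
  shows "mat_mul d B A = idm d"
proof -
  have carrier: "to_mat d A \<in> carrier_mat d d" "to_mat d B \<in> carrier_mat d d"
    by (auto simp: to_mat_def)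
  have "to_mat d A * to_mat d B = 1\<^sub>m d"
    using assms(3) by (simp add: to_mat_mul to_mat_idm)
  then have "to_mat d B * to_mat d A = 1\<^sub>m d"
    by (rule mat_mult_left_right_inverse[OF carrier])
  then have "to_mat d (mat_mul d B A) = to_mat d (idm d)"
    by (simp add: to_mat_mul to_mat_idm)
  then show ?thesis
    by (rule to_mat_inj[OF mat_supp_mul[OF assms(2,1)] mat_supp_idm])
qed

section \<open>The orthogonal group and its action\<close>

lemma Vsp_iff: "x \<in> Vsp d \<longleftrightarrow> vec_supp d (fst x) \<and> mat_supp d (snd x) \<and> (\<forall>i j. snd x i j = - snd x j i)"
  by (cases x) (simp add: Vsp_def vec_supp_def mat_supp_def)

lemma VspI:
  "\<lbrakk>vec_supp d (fst x); mat_supp d (snd x); \<And>i j. snd x i j = - snd x j i\<rbrakk> \<Longrightarrow> x \<in> Vsp d"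
  unfolding Vsp_iff by blast

lemma
  assumes "x \<in> Vsp d"
  shows Vsp_vec_supp: "vec_supp d (fst x)"
    and Vsp_mat_supp: "mat_supp d (snd x)"
    and Vsp_skew: "snd x i j = - snd x j i"
  using assms unfolding Vsp_iff by blast+

lemma Vsp_fst_eq_0: "x \<in> Vsp d \<Longrightarrow> i \<notin> {1..d} \<Longrightarrow> fst x i = 0"
  using Vsp_vec_supp vec_supp_def by blast

lemma Vsp_snd_eq_0: "x \<in> Vsp d \<Longrightarrow> i \<notin> {1..d} \<or> j \<notin> {1..d} \<Longrightarrow> snd x i j = 0"
  using Vsp_mat_supp mat_supp_def by blast

lemma vec_supp_col: "x \<in> Vsp d \<Longrightarrow> vec_supp d (\<lambda>a. snd x a c)"
  by (auto simp: vec_supp_def intro: Vsp_snd_eq_0)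

lemma embed_Vsp: "embed z \<in> Vsp d \<longleftrightarrow> z \<in> Vsp d"
  by (simp add: Vsp_iff embed_def vec_supp_def mat_supp_def)

lemma act_eq: "act d A x = (mat_vec d A (fst x), mat_mul d (mat_mul d A (snd x)) (mat_transpose A))"
  unfolding act_def mat_vec_def mat_mul_def mat_transpose_def
  by (simp add: sum_distrib_right) (rule ext, rule ext, rule sum.swap)

lemma act_act: "act d A (act d B x) = act d (mat_mul d A B) x"
  by (simp add: act_eq mat_vec_mat_vec mat_mul_assoc mat_transpose_mul)

lemma act_idm: "x \<in> Vsp d \<Longrightarrow> act d (idm d) x = x"
  by (simp add: act_eq Vsp_vec_supp Vsp_mat_supp mat_vec_idm mat_mul_idm_left mat_mul_idm_right)

lemma act_Vsp:
  assumes x: "x \<in> Vsp d" and A: "mat_supp d A"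
  shows "act d A x \<in> Vsp d"
proof (rule VspI)
  show "vec_supp d (fst (act d A x))"
    using A unfolding mat_supp_def vec_supp_def by (simp add: act_eq mat_vec_def)
  show "mat_supp d (snd (act d A x))"
    using A Vsp_mat_supp[OF x] by (simp add: act_eq mat_supp_mul mat_supp_transpose)
  have skew: "mat_transpose (snd x) = (\<lambda>i j. - snd x i j)"
    unfolding mat_transpose_def by (intro ext) (rule Vsp_skew[OF x])
  have "mat_transpose (snd (act d A x)) = mat_mul d (mat_mul d A (mat_transpose (snd x))) (mat_transpose A)"
    by (simp add: act_eq mat_transpose_mul mat_mul_assoc)
  also have "\<dots> = (\<lambda>i j. - snd (act d A x) i j)"
    unfolding skew act_eq mat_mul_def by (simp add: sum_negf)
  finally show "snd (act d A x) i j = - snd (act d A x) j i" for i j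
    unfolding mat_transpose_def by (metis add.inverse_inverse)
qed

lemma Orth_iff: "C \<in> Orth d \<longleftrightarrow> mat_supp d C \<and> mat_mul d C (mat_transpose C) = idm d"
proof
  assume C: "C \<in> Orth d"
  then have supp: "mat_supp d C" by (auto simp: Orth_def mat_supp_def)
  have "mat_mul d C (mat_transpose C) i j = idm d i j" for i j
  proof (cases "i \<in> {1..d} \<and> j \<in> {1..d}")
    case True
    then show ?thesis using C by (simp add: Orth_def mat_mul_def mat_transpose_def idm_def)
  next
    case False
    then have "\<And>k. C i k * C j k = 0" using supp by (auto simp: mat_supp_def)
    then show ?thesis using False by (auto simp: mat_mul_def mat_transpose_def idm_def)
  qed
  then show "mat_supp d C \<and> mat_mul d C (mat_transpose C) = idm d" using supp by auto
next
  assume "mat_supp d C \<and> mat_mul d C (mat_transpose C) = idm d"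
  then show "C \<in> Orth d"
    by (auto simp: Orth_def mat_supp_def mat_mul_def mat_transpose_def idm_def fun_eq_iff)
qed

lemma
  assumes "C \<in> Orth d"
  shows Orth_mat_supp: "mat_supp d C"
    and Orth_mul_transpose: "mat_mul d C (mat_transpose C) = idm d"
  using assms by (simp_all add: Orth_iff)

lemma Orth_transpose_mul:
  fixes C :: "nat \<Rightarrow> nat \<Rightarrow> 'a::field"
  shows "C \<in> Orth d \<Longrightarrow> mat_mul d (mat_transpose C) C = idm d"
  by (simp add: Orth_iff mat_mul_right_inverse_imp_left mat_supp_transpose)

lemma Orth_transpose:
  fixes C :: "nat \<Rightarrow> nat \<Rightarrow> 'a::field"
  shows "C \<in> Orth d \<Longrightarrow> mat_transpose C \<in> Orth d"
  by (simp add: Orth_iff Orth_transpose_mul mat_supp_transpose)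

lemma Orth_idm: "idm d \<in> Orth d"
  by (simp add: Orth_iff mat_supp_idm mat_mul_idm_left)

lemma Orth_mul:
  assumes A: "A \<in> Orth d" and B: "B \<in> Orth d"
  shows "mat_mul d A B \<in> Orth d"
proof -
  have "mat_mul d (mat_mul d A B) (mat_transpose (mat_mul d A B))
      = mat_mul d A (mat_mul d (mat_mul d B (mat_transpose B)) (mat_transpose A))"
    by (simp add: mat_transpose_mul mat_mul_assoc)
  also have "\<dots> = idm d"
    using A B by (simp add: Orth_iff mat_mul_idm_left mat_supp_transpose)
  finally show ?thesis
    using A B by (simp add: Orth_iff mat_supp_mul)
qed

lemma Orth_row_inner: "C \<in> Orth d \<Longrightarrow> (\<Sum>l=1..d. C a l * C b l) = idm d a b"
  using fun_cong[OF fun_cong[OF Orth_mul_transpose], of C d a b]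
  by (simp add: mat_mul_def mat_transpose_def)

lemma Orth_col_inner:
  fixes C :: "nat \<Rightarrow> nat \<Rightarrow> 'a::field"
  shows "C \<in> Orth d \<Longrightarrow> (\<Sum>l=1..d. C l a * C l b) = idm d a b"
  using Orth_row_inner[OF Orth_transpose] by (simp add: mat_transpose_def)

lemma act_transpose_act:
  fixes C :: "nat \<Rightarrow> nat \<Rightarrow> 'a::field"
  shows "C \<in> Orth d \<Longrightarrow> z \<in> Vsp d \<Longrightarrow> act d (mat_transpose C) (act d C z) = z"
  by (simp add: act_act Orth_transpose_mul act_idm)

lemma act_Orth_Vsp: "C \<in> Orth d \<Longrightarrow> z \<in> Vsp d \<Longrightarrow> act d C z \<in> Vsp d"
  by (simp add: act_Vsp Orth_mat_supp)

lemma Orth_intertwines_act: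
  fixes C :: "nat \<Rightarrow> nat \<Rightarrow> 'a::field"
  assumes C: "C \<in> Orth d" and z: "z \<in> Vsp d"
  shows "mat_mul d C (snd z) = mat_mul d (snd (act d C z)) C"
proof -
  have "mat_mul d (snd (act d C z)) C = mat_mul d (mat_mul d C (snd z)) (mat_mul d (mat_transpose C) C)"
    by (simp add: act_eq mat_mul_assoc)
  also have "\<dots> = mat_mul d C (snd z)"
    using C z by (simp add: Orth_transpose_mul mat_mul_idm_right mat_supp_mul Orth_mat_supp Vsp_mat_supp)
  finally show ?thesis by simp
qed

lemma Orth_sum_sq_mat_vec:
  fixes C :: "nat \<Rightarrow> nat \<Rightarrow> 'a::field"
  assumes C: "C \<in> Orth d"
  shows "(\<Sum>i=1..d. (mat_vec d C u i)\<^sup>2) = (\<Sum>i=1..d. (u i)\<^sup>2)"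
proof -
  have "(\<Sum>i=1..d. (mat_vec d C u i)\<^sup>2) = (\<Sum>i=1..d. \<Sum>a=1..d. \<Sum>b=1..d. u a * u b * (C i a * C i b))"
    unfolding mat_vec_def power2_eq_square by (simp add: sum_product mult_ac)
  also have "\<dots> = (\<Sum>a=1..d. \<Sum>i=1..d. \<Sum>b=1..d. u a * u b * (C i a * C i b))"
    by (rule sum.swap)
  also have "\<dots> = (\<Sum>a=1..d. \<Sum>b=1..d. \<Sum>i=1..d. u a * u b * (C i a * C i b))"
    by (rule sum.cong[OF refl], rule sum.swap)
  also have "\<dots> = (\<Sum>a=1..d. \<Sum>b=1..d. u a * u b * (\<Sum>i=1..d. C i a * C i b))"
    by (simp add: sum_distrib_left)
  also have "\<dots> = (\<Sum>a=1..d. \<Sum>b=1..d. u a * u b * idm d a b)"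
    using Orth_col_inner[OF C] by simp
  also have "\<dots> = (\<Sum>a=1..d. u a * u a)"
  proof (rule sum.cong[OF refl])
    fix a assume "a \<in> {1..d}"
    then show "(\<Sum>b=1..d. u a * u b * idm d a b) = u a * u a"
      using sum_idm_right[of "\<lambda>b. u a * u b" d a] by (simp add: idm_sym)
  qed
  finally show ?thesis by (simp add: power2_eq_square)
qed

lemma Orth_abs_le_1:
  fixes C :: "nat \<Rightarrow> nat \<Rightarrow> real"
  assumes C: "C \<in> Orth d"
  shows "\<bar>C i j\<bar> \<le> 1"
proof (cases "i \<in> {1..d} \<and> j \<in> {1..d}")
  case True
  have "(C i j)\<^sup>2 \<le> (\<Sum>k=1..d. C i k * C i k)"
    unfolding power2_eq_square using True by (intro member_le_sum) auto
  also have "\<dots> = 1"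
    using True Orth_row_inner[OF C, of i i] by (simp add: idm_def)
  finally show ?thesis by (simp add: abs_square_le_1)
next
  case False
  then show ?thesis using Orth_mat_supp[OF C] by (auto simp: mat_supp_def)
qed

section \<open>Householder reflections\<close>

definition vec_dot :: "nat \<Rightarrow> (nat \<Rightarrow> real) \<Rightarrow> (nat \<Rightarrow> real) \<Rightarrow> real"
  where "vec_dot d u w = (\<Sum>l=1..d. u l * w l)"

definition reflection :: "nat \<Rightarrow> (nat \<Rightarrow> real) \<Rightarrow> nat \<Rightarrow> nat \<Rightarrow> real"
  where "reflection d w = (\<lambda>i j. idm d i j - 2 * w i * w j / vec_dot d w w)"

lemma vec_dot_self_nonneg: "vec_dot d w w \<ge> 0"
  by (simp add: vec_dot_def sum_nonneg)

lemma vec_dot_self_eq_0: "vec_supp d w \<Longrightarrow> vec_dot d w w = 0 \<Longrightarrow> w i = 0"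
  by (cases "i \<in> {1..d}") (auto simp: vec_dot_def vec_supp_def sum_nonneg_eq_0_iff)

lemma vec_dot_eq_0: "(\<And>l. u l * w l = 0) \<Longrightarrow> vec_dot d u w = 0"
  unfolding vec_dot_def by (rule sum.neutral) blast

lemma mat_supp_reflection: "vec_supp d w \<Longrightarrow> mat_supp d (reflection d w)"
  by (auto simp: mat_supp_def reflection_def idm_def vec_supp_def)

lemma reflection_row: "w c = 0 \<Longrightarrow> reflection d w c b = idm d c b"
  by (simp add: reflection_def)

lemma mat_vec_reflection:
  assumes "vec_supp d r"
  shows "mat_vec d (reflection d w) r = (\<lambda>i. r i - 2 * vec_dot d w r / vec_dot d w w * w i)"
proof
  fix i
  have "mat_vec d (reflection d w) r i
      = mat_vec d (idm d) r i - (\<Sum>j=1..d. (2 * w i / vec_dot d w w) * (w j * r j))"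
    unfolding mat_vec_def reflection_def left_diff_distrib sum_subtractf
    by (simp add: mult_ac)
  also have "\<dots> = r i - 2 * vec_dot d w r / vec_dot d w w * w i"
    using assms unfolding vec_dot_def sum_distrib_left[symmetric] by (simp add: mat_vec_idm)
  finally show "mat_vec d (reflection d w) r i = r i - 2 * vec_dot d w r / vec_dot d w w * w i" .
qed

lemma mat_vec_reflection_fix: "vec_supp d r \<Longrightarrow> vec_dot d w r = 0 \<Longrightarrow> mat_vec d (reflection d w) r = r"
  by (simp add: mat_vec_reflection)

text \<open>Since \<open>x / 0 = 0\<close>, the reflection along the zero vector is the identity.\<close>

lemma reflection_Orth:
  assumes w: "vec_supp d w"
  shows "reflection d w \<in> Orth d"
proof (cases "vec_dot d w w = 0")
  case True
  then show ?thesis by (simp add: reflection_def Orth_idm)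
next
  case False
  have "mat_mul d (reflection d w) (reflection d w) j' j = idm d j' j" for j' j
  proof -
    define col where "col = (\<lambda>k. reflection d w k j)"
    have "vec_dot d w col = (\<Sum>k=1..d. w k * idm d k j) - 2 * w j / vec_dot d w w * vec_dot d w w"
      unfolding vec_dot_def col_def reflection_def
      by (simp add: right_diff_distrib sum_subtractf sum_distrib_left) (simp add: mult_ac)
    also have "\<dots> = - w j"
      using False w sum_idm_right[of w d j] by (simp add: vec_supp_def)
    finally have "vec_dot d w col = - w j" .
    moreover have "vec_supp d col"
      using w by (auto simp: col_def vec_supp_def reflection_def idm_def)
    ultimately have "mat_vec d (reflection d w) col j' = col j' + 2 * w j / vec_dot d w w * w j'"
      by (simp add: mat_vec_reflection)
    then show ?thesis
      by (simp add: mat_mul_def mat_vec_def col_def reflection_def)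
  qed
  then have "mat_mul d (reflection d w) (reflection d w) = idm d"
    by (intro ext)
  moreover have "mat_transpose (reflection d w) = reflection d w"
    by (auto simp: mat_transpose_def reflection_def idm_def intro!: ext)
  ultimately show ?thesis
    using w by (simp add: Orth_iff mat_supp_reflection)
qed

lemma reflection_to_axis:
  fixes u :: "nat \<Rightarrow> real"
  assumes u: "vec_supp d u" and t: "t \<in> {1..d}"
  defines "e \<equiv> (\<lambda>l. if l = t then sqrt (vec_dot d u u) else 0)"
  shows "mat_vec d (reflection d (\<lambda>l. u l - e l)) u = e"
proof -
  define w where "w = (\<lambda>l. u l - e l)"
  have "vec_dot d e u = (\<Sum>l=1..d. if l = t then sqrt (vec_dot d u u) * u l else 0)"
    unfolding vec_dot_def e_def by (rule sum.cong) auto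
  then have eu: "vec_dot d e u = sqrt (vec_dot d u u) * u t"
    using t by simp
  have "vec_dot d e e = (\<Sum>l=1..d. if l = t then sqrt (vec_dot d u u) * sqrt (vec_dot d u u) else 0)"
    unfolding vec_dot_def e_def by (rule sum.cong) auto
  then have ee: "vec_dot d e e = vec_dot d u u"
    using t vec_dot_self_nonneg[of d u] by simp
  have wu: "vec_dot d w u = vec_dot d u u - sqrt (vec_dot d u u) * u t"
    using eu by (simp add: w_def vec_dot_def left_diff_distrib sum_subtractf)
  have "vec_dot d w w = vec_dot d u u - 2 * vec_dot d e u + vec_dot d e e"
    by (simp add: w_def vec_dot_def algebra_simps sum_subtractf sum.distrib sum_distrib_left)
  then have ww: "vec_dot d w w = 2 * vec_dot d w u"
    using ee eu wu by simp
  have "mat_vec d (reflection d w) u = (\<lambda>l. u l - 2 * vec_dot d w u / vec_dot d w w * w l)"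
    using u by (simp add: mat_vec_reflection)
  also have "\<dots> = e"
  proof (cases "vec_dot d w w = 0")
    case True
    have "vec_supp d w"
      using u t by (auto simp: w_def e_def vec_supp_def)
    with True show ?thesis
      using vec_dot_self_eq_0 by (fastforce simp: w_def)
  next
    case False
    then show ?thesis using ww by (simp add: w_def)
  qed
  finally show ?thesis by (simp add: w_def)
qed

lemma reflection_to_axis_fixing_tail:
  fixes u :: "nat \<Rightarrow> real"
  assumes u: "vec_supp d u" and t: "t \<in> {1..d}" and tail: "\<forall>l>t. u l = 0"
  obtains H where "H \<in> Orth d" "mat_vec d H u = (\<lambda>l. if l = t then sqrt (vec_dot d u u) else 0)"
    "\<And>r. vec_supp d r \<Longrightarrow> \<forall>l\<le>t. r l = 0 \<Longrightarrow> mat_vec d H r = r"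
    "\<And>c b. t < c \<Longrightarrow> H c b = idm d c b"
proof
  define e where "e = (\<lambda>l. if l = t then sqrt (vec_dot d u u) else 0)"
  have tail_w: "u l - e l = 0" if "t < l" for l
    using tail that by (simp add: e_def)
  show "reflection d (\<lambda>l. u l - e l) \<in> Orth d"
    using u t by (intro reflection_Orth) (auto simp: vec_supp_def e_def)
  show "mat_vec d (reflection d (\<lambda>l. u l - e l)) u = e"
    unfolding e_def by (rule reflection_to_axis[OF u t])
  show "mat_vec d (reflection d (\<lambda>l. u l - e l)) r = r" if "vec_supp d r" "\<forall>l\<le>t. r l = 0" for r
    using that(1)
  proof (rule mat_vec_reflection_fix, intro vec_dot_eq_0)
    fix l
    show "(u l - e l) * r l = 0"
      using that(2) tail_w[of l] by (cases "l \<le> t") auto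
  qed
  show "reflection d (\<lambda>l. u l - e l) c b = idm d c b" if "t < c" for c b
    using tail_w[OF that] by (rule reflection_row)
qed

section \<open>Slices and the orbit normal form\<close>

text \<open>Column form of the equations of \<open>L\<^sup>(\<^sup>j\<^sup>)\<close>: \<open>v\<close> is a multiple of \<open>e\<^sub>d\<close>, and the
  columns \<open>d - j + 2, \<dots>, d\<close> of \<open>M\<close> vanish above the subdiagonal.\<close>

definition on_slice :: "nat \<Rightarrow> nat \<Rightarrow> ('a::zero) pt \<Rightarrow> bool"
  where "on_slice d j x \<longleftrightarrow>
    (\<forall>k\<in>{1..d-1}. fst x k = 0) \<and> (\<forall>c\<in>{d+2-j..d}. \<forall>k\<in>{1..c-2}. snd x k c = 0)"

lemma on_slice_Suc:
  assumes "1 \<le> j"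
  shows "on_slice d (Suc j) x \<longleftrightarrow> on_slice d j x \<and> (\<forall>k\<in>{1..d-1-j}. snd x k (d+1-j) = 0)"
proof (cases "j \<le> d")
  case True
  then have "{d+2 - Suc j..d} = insert (d+1-j) {d+2-j..d}"
    using assms by auto
  moreover have "d+1-j-2 = d-1-j" by simp
  ultimately show ?thesis
    unfolding on_slice_def by auto
next
  case False
  then have "{d+2 - Suc j..d} \<subseteq> {0..1} \<union> {d+2-j..d}"
    by auto
  then show ?thesis
    using False unfolding on_slice_def by (auto simp: subset_iff)
qed

lemma on_slice_one: "on_slice d 1 x \<longleftrightarrow> (\<forall>k\<in>{1..d-1}. fst x k = 0)"
  by (simp add: on_slice_def)

lemma on_slice_mono: "j \<le> j' \<Longrightarrow> on_slice d j' x \<Longrightarrow> on_slice d j x"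
  unfolding on_slice_def by (meson atLeastAtMost_iff diff_le_mono2 le_trans add_le_mono)

lemma on_slice_last: "2 \<le> d \<Longrightarrow> on_slice d (d - 1) x \<Longrightarrow> on_slice d d x"
  using on_slice_Suc[of "d - 1" d x] by (simp add: Suc_diff_1)

lemma on_slice_embed: "on_slice d j (embed z) \<longleftrightarrow> on_slice d j z"
  by (simp add: on_slice_def embed_def)

lemma Lsl_eq: "1 \<le> j \<Longrightarrow> Lsl d j = {x \<in> Vsp d. on_slice d j x}"
proof (induction j)
  case 0
  then show ?case by simp
next
  case (Suc j)
  show ?case
  proof (cases "j = 0")
    case True
    then show ?thesis using on_slice_one[of d] by auto
  next
    case False
    have new_col: "(\<forall>k\<in>{1..d - Suc j}. snd x k (d - Suc j + 2) = 0) \<longleftrightarrow> (\<forall>k\<in>{1..d-1-j}. snd x k (d+1-j) = 0)"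
      for x :: "complex pt"
    proof (cases "j < d")
      case True
      then have "d - Suc j + 2 = d + 1 - j" by arith
      then show ?thesis by simp
    qed auto
    have "x \<in> Lsl d (Suc j) \<longleftrightarrow> x \<in> Vsp d \<and> on_slice d (Suc j) x" for x
      using False Suc on_slice_Suc[of j d x] new_col[of x] by auto
    then show ?thesis by blast
  qed
qed

lemma snd_act_col:
  assumes H: "\<forall>b\<in>{1..d}. H c b = idm d c b" and c: "c \<in> {1..d}"
  shows "snd (act d H z) k c = mat_vec d H (\<lambda>a. snd z a c) k"
proof -
  have "snd (act d H z) k c = (\<Sum>l=1..d. H k l * (\<Sum>b=1..d. snd z l b * idm d b c))"
    using H by (simp add: act_def sum_distrib_left mult.assoc idm_sym)
  also have "\<dots> = mat_vec d H (\<lambda>a. snd z a c) k"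
    using c sum_idm_right[of "snd z _" d c] by (simp add: mat_vec_def)
  finally show ?thesis .
qed

lemma Orth_reflect_fst_to_slice:
  fixes y :: "real pt"
  assumes y: "y \<in> Vsp d" and d: "1 \<le> d"
  shows "\<exists>H\<in>Orth d. on_slice d 1 (act d H y)"
proof -
  have "d \<in> {1..d}" "\<forall>l>d. fst y l = 0"
    using d Vsp_fst_eq_0[OF y] by auto
  then obtain H where "H \<in> Orth d"
    and "mat_vec d H (fst y) = (\<lambda>l. if l = d then sqrt (vec_dot d (fst y) (fst y)) else 0)"
    by (rule reflection_to_axis_fixing_tail[OF Vsp_vec_supp[OF y]])
  then show ?thesis
    unfolding on_slice_one by (intro bexI[of _ H]) (auto simp: act_eq)
qed

text \<open>The reflection moves the part of column \<open>c = d + 1 - j\<close> above the diagonal onto the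
  subdiagonal entry and fixes all vectors supported in \<open>{c..d}\<close>, in particular the first
  component and the columns already normalised.\<close>

lemma Orth_reflect_slice_Suc:
  fixes z :: "real pt"
  assumes z: "z \<in> Vsp d" and j: "1 \<le> j" "j < d" and slice: "on_slice d j z"
  shows "\<exists>H\<in>Orth d. on_slice d (Suc j) (act d H z)"
proof -
  define c where "c = d + 1 - j"
  have c: "2 \<le> c" "c \<le> d" "c - 1 \<in> {1..d}" "d - 1 - j = c - 2" "d + 2 - j = c + 1" "d + 1 - j = c"
    using j by (auto simp: c_def)
  define u where "u = (\<lambda>l. if l \<in> {1..c-1} then snd z l c else 0)"
  have "vec_supp d u" "\<forall>l>c-1. u l = 0"
    using c by (auto simp: u_def vec_supp_def)
  then obtain H where H: "H \<in> Orth d"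
    and Hu: "mat_vec d H u = (\<lambda>l. if l = c - 1 then sqrt (vec_dot d u u) else 0)"
    and H_fix: "\<And>r. vec_supp d r \<Longrightarrow> \<forall>l\<le>c-1. r l = 0 \<Longrightarrow> mat_vec d H r = r"
    and H_rows: "\<And>c' b. c - 1 < c' \<Longrightarrow> H c' b = idm d c' b"
    using reflection_to_axis_fixing_tail[OF _ c(3)] by blast
  have col: "snd (act d H z) k c' = mat_vec d H (\<lambda>a. snd z a c') k" if "c' \<in> {c..d}" for k c'
    using that c H_rows by (intro snd_act_col) auto
  have "fst (act d H z) = fst z"
    unfolding act_eq fst_conv
  proof (rule H_fix[OF Vsp_vec_supp[OF z]], intro allI impI)
    fix l assume "l \<le> c - 1"
    then show "fst z l = 0"
      using slice Vsp_fst_eq_0[OF z, of l] c by (cases "l = 0") (auto simp: on_slice_def)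
  qed
  moreover have "snd (act d H z) k c' = 0" if c': "c' \<in> {d+2-j..d}" and k: "k \<in> {1..c'-2}" for k c'
  proof -
    have "mat_vec d H (\<lambda>a. snd z a c') = (\<lambda>a. snd z a c')"
    proof (rule H_fix[OF vec_supp_col[OF z]], intro allI impI)
      fix l assume "l \<le> c - 1"
      then show "snd z l c' = 0"
        using slice c' c Vsp_snd_eq_0[OF z, of l c'] by (cases "l = 0") (auto simp: on_slice_def)
    qed
    then show ?thesis
      using col[of c' k] c' k c slice by (auto simp: on_slice_def)
  qed
  moreover have "snd (act d H z) k c = 0" if k: "k \<in> {1..c-2}" for k
  proof -
    define r where "r = (\<lambda>l. if l \<in> {1..c-1} then 0 else snd z l c)"
    have "vec_supp d r"
      using vec_supp_col[OF z, of c] by (auto simp: vec_supp_def r_def)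
    then have "mat_vec d H r = r"
      using Vsp_snd_eq_0[OF z, of 0 c] by (intro H_fix) (auto simp: r_def Suc_le_eq)
    moreover have "(\<lambda>a. snd z a c) = (\<lambda>a. u a + r a)"
      by (auto simp: u_def r_def)
    ultimately have "snd (act d H z) k c = (if k = c - 1 then sqrt (vec_dot d u u) else 0) + r k"
      using col[of c k] c by (simp add: mat_vec_add Hu)
    moreover have "k \<noteq> c - 1" "k \<in> {1..c-1}"
      using k c(1) by auto
    ultimately show ?thesis
      by (simp add: r_def)
  qed
  ultimately have "on_slice d (Suc j) (act d H z)"
    using slice c unfolding on_slice_Suc[OF j(1)] by (simp add: on_slice_def)
  with H show ?thesis by blast
qed

lemma Vsp_orbit_meets_slice:
  fixes y :: "real pt"
  assumes y: "y \<in> Vsp d" and d: "1 \<le> d"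
  shows "\<exists>B z. B \<in> Orth d \<and> z \<in> Vsp d \<and> on_slice d j z \<and> y = act d B z"
proof -
  have "\<exists>C\<in>Orth d. on_slice d j (act d C y)"
  proof (induction j)
    case 0
    then show ?case
      using Orth_reflect_fst_to_slice[OF y d] on_slice_mono[of 0 1] by blast
  next
    case (Suc j)
    then obtain C where C: "C \<in> Orth d" "on_slice d j (act d C y)"
      by blast
    consider "j = 0" | "d \<le> j" | "1 \<le> j" "j < d"
      by linarith
    then show ?case
    proof cases
      case 1
      then show ?thesis using Orth_reflect_fst_to_slice[OF y d] by simp
    next
      case 2
      then show ?thesis using C on_slice_Suc[of j d "act d C y"] d by auto
    next
      case 3
      then obtain H where "H \<in> Orth d" "on_slice d (Suc j) (act d H (act d C y))"
        using Orth_reflect_slice_Suc[OF act_Orth_Vsp[OF C(1) y] _ _ C(2)] by auto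
      then show ?thesis
        using Orth_mul[OF _ C(1)] by (auto simp: act_act)
    qed
  qed
  then obtain C where "C \<in> Orth d" "on_slice d j (act d C y)"
    by blast
  then show ?thesis
    using act_transpose_act[of C d y] y Orth_transpose act_Orth_Vsp by metis
qed

section \<open>Rigidity at generic points of the slices\<close>

definition slice_generic :: "nat \<Rightarrow> nat \<Rightarrow> real pt \<Rightarrow> bool"
  where "slice_generic d j z \<longleftrightarrow> fst z d \<noteq> 0 \<and> (\<forall>c\<in>{d+2-j..d}. snd z (c-1) c \<noteq> 0)"

definition signed_unit_col :: "nat \<Rightarrow> (nat \<Rightarrow> nat \<Rightarrow> real) \<Rightarrow> nat \<Rightarrow> bool"
  where "signed_unit_col d C k \<longleftrightarrow> (\<forall>i\<in>{1..d}. i \<noteq> k \<longrightarrow> C i k = 0) \<and> (C k k)\<^sup>2 = 1"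

definition col_sq_above :: "nat \<Rightarrow> real pt \<Rightarrow> real"
  where "col_sq_above c z = (\<Sum>l=1..c-1. (snd z l c)\<^sup>2)"

lemma slice_generic_mono: "j \<le> j' \<Longrightarrow> slice_generic d j' z \<Longrightarrow> slice_generic d j z"
  unfolding slice_generic_def by (meson atLeastAtMost_iff diff_le_mono2 le_trans add_le_mono)

lemma slice_generic_Suc:
  assumes "1 \<le> j" "j < d"
  shows "slice_generic d (Suc j) z \<longleftrightarrow> slice_generic d j z \<and> snd z (d-j) (d+1-j) \<noteq> 0"
proof -
  have "{d+2 - Suc j..d} = insert (d+1-j) {d+2-j..d}" "d+1-j-1 = d-j"
    using assms by auto
  then show ?thesis
    unfolding slice_generic_def by auto
qed

lemma signed_unit_colI:
  assumes C: "C \<in> Orth d" and k: "k \<in> {1..d}" and zero: "\<forall>i\<in>{1..d}. i \<noteq> k \<longrightarrow> C i k = 0"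
  shows "signed_unit_col d C k"
proof -
  have "(\<Sum>l=1..d. C l k * C l k) = C k k * C k k"
    using k zero by (intro sum_eq_single) auto
  then show ?thesis
    using Orth_col_inner[OF C, of k k] k zero by (simp add: signed_unit_col_def idm_def power2_eq_square)
qed

lemma signed_unit_col_row:
  assumes C: "C \<in> Orth d" and k: "k \<in> {1..d}" and col: "signed_unit_col d C k"
    and a: "a \<in> {1..d}" "a \<noteq> k"
  shows "C k a = 0"
proof -
  have "(\<Sum>l=1..d. C l a * C l k) = C k a * C k k"
    using col k by (intro sum_eq_single) (auto simp: signed_unit_col_def)
  moreover have "(\<Sum>l=1..d. C l a * C l k) = 0"
    using Orth_col_inner[OF C, of a k] a by (simp add: idm_def)
  moreover have "C k k \<noteq> 0"
    using col by (auto simp: signed_unit_col_def)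
  ultimately show ?thesis by simp
qed

lemma Orth_last_col_from_fst:
  fixes D :: "nat \<Rightarrow> nat \<Rightarrow> real"
  assumes D: "D \<in> Orth d" and d: "1 \<le> d"
    and fst_z: "\<forall>l\<in>{1..d-1}. fst z l = 0" "fst z d \<noteq> 0"
    and fst_Dz: "\<forall>i\<in>{1..d-1}. fst (act d D z) i = 0"
  shows "signed_unit_col d D d"
proof -
  have "D i d = 0" if i: "i \<in> {1..d}" "i \<noteq> d" for i
  proof -
    have "fst (act d D z) i = (\<Sum>l=1..d. D i l * fst z l)"
      by (simp add: act_eq mat_vec_def)
    also have "\<dots> = D i d * fst z d"
      using fst_z(1) d by (intro sum_eq_single) auto
    finally show ?thesis
      using fst_Dz fst_z(2) i by auto
  qed
  then show ?thesis
    using d by (intro signed_unit_colI[OF D]) auto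
qed

text \<open>The relation \<open>D M = M' D\<close> at the entry \<open>(i, c)\<close>, \<open>i < c - 1\<close>, reads
  \<open>D\<^sub>i\<^sub>,\<^sub>c\<^sub>-\<^sub>1 M\<^sub>c\<^sub>-\<^sub>1\<^sub>,\<^sub>c = 0\<close>.\<close>

lemma Orth_col_from_subdiag:
  fixes D :: "nat \<Rightarrow> nat \<Rightarrow> real"
  assumes D: "D \<in> Orth d" and z: "z \<in> Vsp d" and c: "2 \<le> c" "c \<le> d"
    and cols: "\<forall>k\<in>{c..d}. signed_unit_col d D k"
    and above: "\<forall>k\<in>{1..c-2}. snd z k c = 0" "\<forall>k\<in>{1..c-2}. snd (act d D z) k c = 0"
    and subdiag: "snd z (c-1) c \<noteq> 0"
  shows "signed_unit_col d D (c - 1)"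
proof -
  have "D i (c - 1) = 0" if i: "i \<in> {1..d}" "i \<noteq> c - 1" for i
  proof (cases "i < c - 1")
    case True
    have "mat_mul d D (snd z) i c = D i (c - 1) * snd z (c - 1) c"
      unfolding mat_mul_def
    proof (rule sum_eq_single)
      fix k assume k: "k \<in> {1..d}" "k \<noteq> c - 1"
      show "D i k * snd z k c = 0"
      proof (cases "k < c - 1")
        case True
        then show ?thesis using above(1) k by auto
      next
        case False
        then show ?thesis
          using cols k \<open>i < c - 1\<close> i by (auto simp: signed_unit_col_def)
      qed
    qed (use c in auto)
    moreover have "mat_mul d (snd (act d D z)) D i c = snd (act d D z) i c * D c c"
      unfolding mat_mul_def using cols c by (intro sum_eq_single) (auto simp: signed_unit_col_def)
    moreover have "snd (act d D z) i c = 0"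
      using above(2) i True by auto
    ultimately show ?thesis
      using Orth_intertwines_act[OF D z] subdiag by simp
  next
    case False
    then have i_tail: "i \<in> {c..d}"
      using i by auto
    show ?thesis
      by (rule signed_unit_col_row[OF D _ cols[rule_format, OF i_tail]]) (use i_tail c i in auto)
  qed
  then show ?thesis
    using c by (intro signed_unit_colI[OF D]) auto
qed

lemma Orth_between_slices_unit_cols:
  fixes D :: "nat \<Rightarrow> nat \<Rightarrow> real"
  assumes D: "D \<in> Orth d" and z: "z \<in> Vsp d"
  shows "\<lbrakk>j \<le> d; on_slice d j z; on_slice d j (act d D z); slice_generic d j z\<rbrakk>
    \<Longrightarrow> \<forall>k\<in>{d+1-j..d}. signed_unit_col d D k"
proof (induction j)
  case 0
  then show ?case by simp
next
  case (Suc j)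
  have IH: "\<forall>k\<in>{d+1-j..d}. signed_unit_col d D k"
    using Suc.IH Suc.prems on_slice_mono[of j "Suc j" d z] on_slice_mono[of j "Suc j" d "act d D z"]
      slice_generic_mono[of j "Suc j" d z] by simp
  have "signed_unit_col d D (d - j)"
  proof (cases "j = 0")
    case True
    then show ?thesis
      using Orth_last_col_from_fst[OF D] Suc.prems by (simp add: on_slice_def slice_generic_def)
  next
    case False
    define c where "c = d + 1 - j"
    have c: "2 \<le> c" "c \<le> d" "c - 1 = d - j" "d + 2 - Suc j = c"
      using False Suc.prems(1) by (auto simp: c_def)
    have "c \<in> {d + 2 - Suc j..d}"
      using c by simp
    then have "snd z (c - 1) c \<noteq> 0"
      using Suc.prems(4) unfolding slice_generic_def by blast
    then have "signed_unit_col d D (c - 1)"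
      using Orth_col_from_subdiag[OF D z c(1,2)] IH Suc.prems(2,3) c by (auto simp: on_slice_def c_def)
    then show ?thesis
      using c by simp
  qed
  moreover have "{d + 1 - Suc j..d} = insert (d - j) {d+1-j..d}"
    using Suc.prems(1) by auto
  ultimately show ?case
    using IH by auto
qed

lemma col_sq_above_act:
  fixes D :: "nat \<Rightarrow> nat \<Rightarrow> real"
  assumes D: "D \<in> Orth d" and z: "z \<in> Vsp d" and c: "c \<in> {1..d}"
    and cols: "\<forall>k\<in>{c..d}. signed_unit_col d D k"
  shows "col_sq_above c (act d D z) = col_sq_above c z"
proof -
  define M where "M = snd z"
  define N where "N = mat_mul d D M"
  have N: "N = mat_mul d (snd (act d D z)) D"
    using Orth_intertwines_act[OF D z] by (simp add: N_def M_def)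
  have upper: "(N i c)\<^sup>2 = (snd (act d D z) i c)\<^sup>2" for i
  proof -
    have "N i c = snd (act d D z) i c * D c c"
      unfolding N mat_mul_def using cols c by (intro sum_eq_single) (auto simp: signed_unit_col_def)
    then show ?thesis
      using cols c by (simp add: power_mult_distrib signed_unit_col_def)
  qed
  have lower: "(N i c)\<^sup>2 = (M i c)\<^sup>2" if i: "i \<in> {c..d}" for i
  proof -
    have "N i c = D i i * M i c"
      unfolding N_def mat_mul_def using i c signed_unit_col_row[OF D _ cols[rule_format, OF i]]
      by (intro sum_eq_single) auto
    then show ?thesis
      using cols i by (simp add: power_mult_distrib signed_unit_col_def)
  qed
  have sum_split: "(\<Sum>i=1..d. f i) = (\<Sum>i=1..c-1. f i) + (\<Sum>i=c..d. f i)" for f :: "nat \<Rightarrow> real"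
  proof -
    have "{1..d} = {1..c-1} \<union> {c..d}" using c by auto
    then show ?thesis by (simp add: sum.union_disjoint)
  qed
  have "(\<Sum>i=1..d. (N i c)\<^sup>2) = (\<Sum>i=1..d. (M i c)\<^sup>2)"
    using Orth_sum_sq_mat_vec[OF D, of "\<lambda>k. M k c"] by (simp add: N_def mat_mul_def mat_vec_def)
  then have "(\<Sum>i=1..c-1. (N i c)\<^sup>2) = (\<Sum>i=1..c-1. (M i c)\<^sup>2)"
    using sum_split[of "\<lambda>i. (N i c)\<^sup>2"] sum_split[of "\<lambda>i. (M i c)\<^sup>2"] lower by simp
  then show ?thesis
    by (simp add: col_sq_above_def upper M_def)
qed

text \<open>A diagonal orthogonal matrix commuting with \<open>M\<close> has equal diagonal entries along
  every nonzero entry \<open>M\<^sub>n\<^sub>,\<^sub>n\<^sub>+\<^sub>1\<close>.\<close>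

lemma Orth_unit_cols_commuting_eq_idm:
  fixes A M :: "nat \<Rightarrow> nat \<Rightarrow> real"
  assumes A: "A \<in> Orth d" and cols: "\<And>k. k \<in> {1..d} \<Longrightarrow> signed_unit_col d A k"
    and last: "A d d = 1" and comm: "mat_mul d A M = mat_mul d M A"
    and subdiag: "\<And>n. n \<in> {1..d-1} \<Longrightarrow> M n (Suc n) \<noteq> 0"
  shows "A = idm d"
proof -
  have diag: "A c c = 1" if c: "1 \<le> c" "c \<le> d" for c
    using c(2)
  proof (induction rule: inc_induct)
    case base
    show ?case by (rule last)
  next
    case (step n)
    have n: "n \<in> {1..d}" "Suc n \<in> {1..d}" "n \<in> {1..d-1}"
      using step.hyps c by auto
    have "mat_mul d A M n (Suc n) = A n n * M n (Suc n)"
      unfolding mat_mul_def using signed_unit_col_row[OF A n(1) cols[OF n(1)]] n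
      by (intro sum_eq_single) auto
    moreover have "mat_mul d M A n (Suc n) = M n (Suc n) * A (Suc n) (Suc n)"
      unfolding mat_mul_def using cols[OF n(2)] n
      by (intro sum_eq_single) (auto simp: signed_unit_col_def)
    ultimately show ?case
      using comm step.IH subdiag[OF n(3)] by simp
  qed
  show ?thesis
  proof (intro ext)
    fix i j
    show "A i j = idm d i j"
    proof (cases "i \<in> {1..d} \<and> j \<in> {1..d}")
      case True
      then show ?thesis
        using diag cols by (auto simp: idm_def signed_unit_col_def)
    next
      case False
      then show ?thesis
        using Orth_mat_supp[OF A] by (auto simp: mat_supp_def idm_def)
    qed
  qed
qed

lemma Orth_fixing_generic_slice_point:
  fixes A :: "nat \<Rightarrow> nat \<Rightarrow> real"
  assumes A: "A \<in> Orth d" and z: "z \<in> Vsp d" and slice: "on_slice d d z"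
    and generic: "slice_generic d d z" and A_z: "act d A z = z"
  shows "A = idm d"
proof (rule Orth_unit_cols_commuting_eq_idm[OF A])
  have d: "d \<in> {1..d}"
    using generic Vsp_fst_eq_0[OF z, of d] by (cases "d = 0") (auto simp: slice_generic_def)
  show "signed_unit_col d A k" if "k \<in> {1..d}" for k
    using Orth_between_slices_unit_cols[OF A z, of d] slice generic A_z that by simp
  show "mat_mul d A (snd z) = mat_mul d (snd z) A"
    using Orth_intertwines_act[OF A z] A_z by simp
  have "fst z d = (\<Sum>l=1..d. A d l * fst z l)"
    using arg_cong[OF A_z, of "\<lambda>y. fst y d"] by (simp add: act_eq mat_vec_def)
  also have "\<dots> = A d d * fst z d"
    using slice d by (intro sum_eq_single) (auto simp: on_slice_def)
  finally show "A d d = 1"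
    using generic by (simp add: slice_generic_def)
  show "snd z n (Suc n) \<noteq> 0" if "n \<in> {1..d-1}" for n
  proof -
    have "Suc n \<in> {d+2-d..d}"
      using that by auto
    then have "snd z (Suc n - 1) (Suc n) \<noteq> 0"
      using generic unfolding slice_generic_def by blast
    then show ?thesis by simp
  qed
qed

text \<open>\<open>col_sq_above (d + 1 - k) z\<close> is the value of \<open>f\<^sub>k\<^sub>+\<^sub>1\<close> at \<open>z \<in> L\<^sup>(\<^sup>k\<^sup>)\<close>.\<close>

definition nonvanishing_slice_rep :: "nat \<Rightarrow> nat \<Rightarrow> real pt \<Rightarrow> bool"
  where "nonvanishing_slice_rep d k x \<longleftrightarrow>
    (\<exists>B z. B \<in> Orth d \<and> z \<in> Vsp d \<and> on_slice d k z \<and> x = act d B z \<and> col_sq_above (d+1-k) z \<noteq> 0)"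

lemma fst_last_ne_0_if_orbit:
  fixes C :: "nat \<Rightarrow> nat \<Rightarrow> real"
  assumes C: "C \<in> Orth d" and d: "1 \<le> d" and z: "on_slice d 1 z"
    and fst_x: "(\<Sum>i=1..d. (fst (act d C z) i)\<^sup>2) \<noteq> 0"
  shows "fst z d \<noteq> 0"
proof -
  have "(\<Sum>i=1..d. (fst (act d C z) i)\<^sup>2) = (\<Sum>i=1..d. (fst z i)\<^sup>2)"
    using Orth_sum_sq_mat_vec[OF C] by (simp add: act_eq)
  also have "\<dots> = (fst z d)\<^sup>2"
    using z d by (intro sum_eq_single) (auto simp: on_slice_def)
  finally show ?thesis
    using fst_x by simp
qed

text \<open>Two representatives in \<open>L\<^sup>(\<^sup>k\<^sup>)\<close> differ by a matrix whose last \<open>k\<close> columns are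
  signed unit vectors, so \<open>col_sq_above (d + 1 - k)\<close> does not depend on the representative; on
  \<open>L\<^sup>(\<^sup>k\<^sup>+\<^sup>1\<^sup>)\<close> it is the square of a single subdiagonal entry.\<close>

lemma slice_generic_if_reps:
  fixes x :: "real pt"
  assumes fst_x: "(\<Sum>i=1..d. (fst x i)\<^sup>2) \<noteq> 0"
    and reps: "\<forall>k\<in>{1..d-1}. nonvanishing_slice_rep d k x"
  shows "\<lbrakk>1 \<le> j; j \<le> d; C \<in> Orth d; z \<in> Vsp d; on_slice d j z; x = act d C z\<rbrakk>
    \<Longrightarrow> slice_generic d j z"
proof (induction j arbitrary: C z)
  case 0
  then show ?case by simp
next
  case (Suc j)
  show ?case
  proof (cases "j = 0")
    case True
    then show ?thesis
      using fst_last_ne_0_if_orbit[OF Suc.prems(3)] Suc.prems fst_x by (simp add: slice_generic_def)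
  next
    case False
    define c where "c = d + 1 - j"
    have j: "1 \<le> j" "j < d" "j \<in> {1..d-1}"
      using False Suc.prems(2) by auto
    have c: "c \<in> {1..d}" "c - 1 = d - j" "d - 1 - j = c - 2" "2 \<le> c"
      using j by (auto simp: c_def)
    have z_gen: "slice_generic d j z"
      using Suc.IH[OF j(1) _ Suc.prems(3,4) _ Suc.prems(6)] Suc.prems(2,5) on_slice_mono[of j "Suc j" d z]
      by simp
    obtain B y where B: "B \<in> Orth d" "y \<in> Vsp d" "on_slice d j y" "x = act d B y"
        and y_val: "col_sq_above c y \<noteq> 0"
      using reps j(3) unfolding nonvanishing_slice_rep_def c_def by blast
    define D where "D = mat_mul d (mat_transpose C) B"
    have D: "D \<in> Orth d" "act d D y = z"
      using Orth_mul[OF Orth_transpose[OF Suc.prems(3)] B(1)] B(4) Suc.prems(6)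
        act_transpose_act[OF Suc.prems(3,4)]
      by (simp_all add: D_def act_act[symmetric])
    have "\<forall>k\<in>{c..d}. signed_unit_col d D k"
      using Orth_between_slices_unit_cols[OF D(1) B(2), of j] j B(3) D(2) Suc.prems(5)
        on_slice_mono[of j "Suc j" d z] Suc.IH[OF j(1) _ B(1,2,3,4)]
      by (simp add: c_def)
    then have "col_sq_above c z = col_sq_above c y"
      using col_sq_above_act[OF D(1) B(2) c(1)] D(2) by simp
    moreover have "col_sq_above c z = (snd z (c - 1) c)\<^sup>2"
      unfolding col_sq_above_def
      using Suc.prems(5) c j(1) by (intro sum_eq_single) (auto simp: on_slice_Suc c_def)
    ultimately show ?thesis
      using z_gen y_val slice_generic_Suc[OF j(1,2)] c by (simp add: c_def)
  qed
qed

lemma Orth_stabilizer_trivial_if_reps: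
  fixes x :: "real pt" and A :: "nat \<Rightarrow> nat \<Rightarrow> real"
  assumes d: "2 \<le> d" and fst_x: "(\<Sum>i=1..d. (fst x i)\<^sup>2) \<noteq> 0"
    and reps: "\<forall>k\<in>{1..d-1}. nonvanishing_slice_rep d k x"
    and A: "A \<in> Orth d" and A_x: "act d A x = x"
  shows "A = idm d"
proof -
  obtain B z where B: "B \<in> Orth d" "z \<in> Vsp d" "on_slice d (d - 1) z" "x = act d B z"
    using reps d unfolding nonvanishing_slice_rep_def by fastforce
  have slice: "on_slice d d z"
    using on_slice_last[OF d B(3)] .
  have generic: "slice_generic d d z"
    using slice_generic_if_reps[OF fst_x reps _ _ B(1,2) slice B(4)] d by simp
  define A' where "A' = mat_mul d (mat_transpose B) (mat_mul d A B)"
  have A': "A' \<in> Orth d"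
    unfolding A'_def by (intro Orth_mul Orth_transpose A B(1))
  have "act d A' z = z"
    using A_x act_transpose_act[OF B(1,2)] by (simp add: A'_def act_act[symmetric] B(4)[symmetric])
  then have "A' = idm d"
    by (rule Orth_fixing_generic_slice_point[OF A' B(2) slice generic])
  then have "mat_mul d B (mat_mul d A' (mat_transpose B)) = mat_mul d B (mat_transpose B)"
    using Orth_mat_supp[OF Orth_transpose[OF B(1)]] by (simp add: mat_mul_idm_left)
  moreover have "mat_mul d B (mat_mul d A' (mat_transpose B)) = A"
    using B(1) Orth_mat_supp[OF A]
    by (simp add: A'_def mat_mul_assoc[symmetric] Orth_mul_transpose mat_mul_idm_left)
      (simp add: mat_mul_assoc Orth_mul_transpose mat_mul_idm_right)
  ultimately show ?thesis
    using Orth_mul_transpose[OF B(1)] by simp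
qed

section \<open>Lines and limits of points\<close>

definition line_pt :: "'a::comm_ring_1 pt \<Rightarrow> 'a pt \<Rightarrow> 'a \<Rightarrow> 'a pt"
  where "line_pt a b t = ((\<lambda>i. fst a i + t * fst b i), (\<lambda>i j. snd a i j + t * snd b i j))"

definition diff_pt :: "'a::comm_ring_1 pt \<Rightarrow> 'a pt \<Rightarrow> 'a pt"
  where "diff_pt a b = ((\<lambda>i. fst a i - fst b i), (\<lambda>i j. snd a i j - snd b i j))"

lemma line_pt_0 [simp]: "line_pt a b 0 = a"
  by (simp add: line_pt_def)

lemma line_pt_diff_pt_1 [simp]: "line_pt a (diff_pt b a) 1 = b"
  by (simp add: line_pt_def diff_pt_def)

lemma embed_line_pt: "embed (line_pt a b s) = line_pt (embed a) (embed b) (complex_of_real s)"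
  by (simp add: embed_def line_pt_def)

lemma act_line_pt: "act d B (line_pt a b t) = line_pt (act d B a) (act d B b) t"
  unfolding act_def line_pt_def by (simp add: algebra_simps sum.distrib sum_distrib_left)

lemma line_pt_Vsp:
  assumes a: "a \<in> Vsp d" and b: "b \<in> Vsp d"
  shows "line_pt a b t \<in> Vsp d"
proof (rule VspI)
  show "vec_supp d (fst (line_pt a b t))" "mat_supp d (snd (line_pt a b t))"
    using a b by (auto simp: line_pt_def vec_supp_def mat_supp_def Vsp_fst_eq_0 Vsp_snd_eq_0)
  show "snd (line_pt a b t) i j = - snd (line_pt a b t) j i" for i j
    using Vsp_skew[OF a, of i j] Vsp_skew[OF b, of i j] by (simp add: line_pt_def algebra_simps)
qed

lemma diff_pt_Vsp:
  assumes a: "a \<in> Vsp d" and b: "b \<in> Vsp d"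
  shows "diff_pt a b \<in> Vsp d"
proof (rule VspI)
  show "vec_supp d (fst (diff_pt a b))" "mat_supp d (snd (diff_pt a b))"
    using a b by (auto simp: diff_pt_def vec_supp_def mat_supp_def Vsp_fst_eq_0 Vsp_snd_eq_0)
  show "snd (diff_pt a b) i j = - snd (diff_pt a b) j i" for i j
    using Vsp_skew[OF a, of i j] Vsp_skew[OF b, of i j] by (simp add: diff_pt_def algebra_simps)
qed

lemma on_slice_line_pt: "on_slice d j a \<Longrightarrow> on_slice d j b \<Longrightarrow> on_slice d j (line_pt a b t)"
  by (simp add: on_slice_def line_pt_def)

lemma on_slice_diff_pt: "on_slice d j a \<Longrightarrow> on_slice d j b \<Longrightarrow> on_slice d j (diff_pt a b)"
  by (simp add: on_slice_def diff_pt_def)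

lemma polyfun_line_pt_poly:
  fixes p :: "'a::comm_ring_1 pt \<Rightarrow> 'a"
  assumes "p \<in> polyfun"
  shows "\<exists>P. \<forall>t. p (line_pt a b t) = poly P t"
  using assms
proof induction
  case (pconst c)
  show ?case by (rule exI[of _ "[:c:]"]) simp
next
  case (pvc i)
  show ?case by (rule exI[of _ "[:fst a i, fst b i:]"]) (simp add: line_pt_def)
next
  case (pmc i j)
  show ?case by (rule exI[of _ "[:snd a i j, snd b i j:]"]) (simp add: line_pt_def)
next
  case (padd p q)
  then obtain P Q where "\<forall>t. p (line_pt a b t) = poly P t" "\<forall>t. q (line_pt a b t) = poly Q t"
    by blast
  then show ?case by (intro exI[of _ "P + Q"]) simp
next
  case (pmult p q)
  then obtain P Q where "\<forall>t. p (line_pt a b t) = poly P t" "\<forall>t. q (line_pt a b t) = poly Q t"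
    by blast
  then show ?case by (intro exI[of _ "P * Q"]) simp
qed

lemma polyfun_line_pt_zeros_finite:
  fixes p :: "'a::idom pt \<Rightarrow> 'a"
  assumes "p \<in> polyfun" "p (line_pt a b t0) \<noteq> 0"
  shows "finite {t. p (line_pt a b t) = 0}"
proof -
  obtain P where P: "\<forall>t. p (line_pt a b t) = poly P t"
    using polyfun_line_pt_poly[OF assms(1)] by blast
  then have "P \<noteq> 0"
    using assms(2) by auto
  then show ?thesis
    using P poly_roots_finite[of P] by simp
qed

lemma real_avoiding_finite:
  fixes F :: "complex set"
  assumes "finite F" "\<delta> > 0"
  shows "\<exists>s::real. 0 < s \<and> s < \<delta> \<and> complex_of_real s \<notin> F"
proof -
  have "finite (complex_of_real -` F)"
    using assms(1) by (rule finite_vimageI) (simp add: inj_of_real)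
  moreover have "infinite {0<..<\<delta>}"
    using assms(2) by simp
  ultimately obtain s where "s \<in> {0<..<\<delta>} - complex_of_real -` F"
    using Diff_infinite_finite infinite_imp_nonempty by blast
  then show ?thesis by auto
qed

definition pt_tendsto :: "(nat \<Rightarrow> 'a::topological_space pt) \<Rightarrow> 'a pt \<Rightarrow> bool"
  where "pt_tendsto Y y \<longleftrightarrow>
    (\<forall>i. (\<lambda>n. fst (Y n) i) \<longlonglongrightarrow> fst y i) \<and> (\<forall>i j. (\<lambda>n. snd (Y n) i j) \<longlonglongrightarrow> snd y i j)"

lemma polyfun_tendsto:
  fixes p :: "'a::real_normed_field pt \<Rightarrow> 'a"
  assumes "p \<in> polyfun" and Y: "pt_tendsto Y y"
  shows "(\<lambda>n. p (Y n)) \<longlonglongrightarrow> p y"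
  using assms(1)
proof induction
  case (pconst c)
  show ?case by simp
next
  case (pvc i)
  show ?case using Y by (simp add: pt_tendsto_def)
next
  case (pmc i j)
  show ?case using Y by (simp add: pt_tendsto_def)
next
  case (padd p q)
  then show ?case by (intro tendsto_add)
next
  case (pmult p q)
  then show ?case by (intro tendsto_mult)
qed

lemma pt_tendsto_embed: "pt_tendsto Y y \<Longrightarrow> pt_tendsto (\<lambda>n. embed (Y n)) (embed y)"
  by (simp add: pt_tendsto_def embed_def tendsto_of_real)

lemma pt_tendsto_subseq:
  assumes Y: "pt_tendsto Y y" and r: "strict_mono r"
  shows "pt_tendsto (\<lambda>n. Y (r n)) y"
  unfolding pt_tendsto_def
proof (intro conjI allI)
  fix i j
  show "(\<lambda>n. fst (Y (r n)) i) \<longlonglongrightarrow> fst y i"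
    using LIMSEQ_subseq_LIMSEQ[OF _ r, of "\<lambda>n. fst (Y n) i"] Y by (simp add: pt_tendsto_def o_def)
  show "(\<lambda>n. snd (Y (r n)) i j) \<longlonglongrightarrow> snd y i j"
    using LIMSEQ_subseq_LIMSEQ[OF _ r, of "\<lambda>n. snd (Y n) i j"] Y by (simp add: pt_tendsto_def o_def)
qed

lemma pt_tendsto_act:
  fixes C :: "nat \<Rightarrow> nat \<Rightarrow> nat \<Rightarrow> 'a::real_normed_field"
  assumes "\<And>i j. (\<lambda>n. C n i j) \<longlonglongrightarrow> C' i j" and "pt_tendsto Y y"
  shows "pt_tendsto (\<lambda>n. act d (C n) (Y n)) (act d C' y)"
  using assms unfolding pt_tendsto_def act_def by (auto intro!: tendsto_sum tendsto_mult)

lemma tendsto_const_eq: "(\<lambda>n. c) \<longlonglongrightarrow> L \<Longrightarrow> L = (c::'a::t2_space)"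
  using LIMSEQ_unique tendsto_const by blast

lemma tendsto_zero_seq_eq: "(\<And>n. f n = 0) \<Longrightarrow> f \<longlonglongrightarrow> L \<Longrightarrow> L = (0::'a::{t2_space, zero})"
proof -
  assume f0: "\<And>n. f n = 0" and lim: "f \<longlonglongrightarrow> L"
  have "f = (\<lambda>n. 0)"
    using f0 by (rule ext)
  with lim show ?thesis
    using tendsto_const_eq by blast
qed

lemma pt_tendsto_Vsp:
  fixes Y :: "nat \<Rightarrow> 'a::{real_normed_vector, comm_ring_1} pt"
  assumes Y: "pt_tendsto Y y" and V: "\<And>n. Y n \<in> Vsp d"
  shows "y \<in> Vsp d"
proof (rule VspI)
  show "vec_supp d (fst y)"
    unfolding vec_supp_def
  proof (intro allI impI)
    fix i assume i: "i \<notin> {1..d}"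
    have "(\<lambda>n. fst (Y n) i) \<longlonglongrightarrow> fst y i"
      using Y by (simp add: pt_tendsto_def)
    then show "fst y i = 0"
      by (rule tendsto_zero_seq_eq[rotated]) (rule Vsp_fst_eq_0[OF V i])
  qed
  show "mat_supp d (snd y)"
    unfolding mat_supp_def
  proof (intro allI impI)
    fix i j assume ij: "i \<notin> {1..d} \<or> j \<notin> {1..d}"
    have "(\<lambda>n. snd (Y n) i j) \<longlonglongrightarrow> snd y i j"
      using Y by (simp add: pt_tendsto_def)
    then show "snd y i j = 0"
      by (rule tendsto_zero_seq_eq[rotated]) (rule Vsp_snd_eq_0[OF V ij])
  qed
  fix i j
  have "(\<lambda>n. snd (Y n) i j) \<longlonglongrightarrow> snd y i j"
    using Y by (simp add: pt_tendsto_def)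
  moreover have "(\<lambda>n. - snd (Y n) j i) \<longlonglongrightarrow> - snd y j i"
    using Y by (intro tendsto_minus) (simp add: pt_tendsto_def)
  moreover have "(\<lambda>n. - snd (Y n) j i) = (\<lambda>n. snd (Y n) i j)"
    using Vsp_skew[OF V, of _ i j] by simp
  ultimately show "snd y i j = - snd y j i"
    using LIMSEQ_unique by metis
qed

lemma pt_tendsto_on_slice:
  fixes Y :: "nat \<Rightarrow> 'a::real_normed_vector pt"
  assumes Y: "pt_tendsto Y y" and H: "\<And>n. on_slice d j (Y n)"
  shows "on_slice d j y"
  unfolding on_slice_def
proof (intro conjI ballI)
  fix k assume k: "k \<in> {1..d-1}"
  have "(\<lambda>n. fst (Y n) k) \<longlonglongrightarrow> fst y k"
    using Y by (simp add: pt_tendsto_def)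
  then show "fst y k = 0"
    by (rule tendsto_zero_seq_eq[rotated]) (use H k in \<open>simp add: on_slice_def\<close>)
next
  fix c k assume ck: "c \<in> {d+2-j..d}" "k \<in> {1..c-2}"
  have "(\<lambda>n. snd (Y n) k c) \<longlonglongrightarrow> snd y k c"
    using Y by (simp add: pt_tendsto_def)
  then show "snd y k c = 0"
    by (rule tendsto_zero_seq_eq[rotated]) (use H ck in \<open>simp add: on_slice_def\<close>)
qed

lemma bounded_seq_convergent_subseq:
  fixes X :: "nat \<Rightarrow> 'i \<Rightarrow> real"
  assumes "finite F" and bound: "\<And>n i. \<bar>X n i\<bar> \<le> 1"
  shows "\<exists>r. strict_mono r \<and> (\<forall>i\<in>F. convergent (\<lambda>n. X (r n) i))"
  using assms(1)
proof (induction F rule: finite_induct)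
  case empty
  show ?case by (rule exI[of _ id]) (simp add: strict_mono_def)
next
  case (insert a F)
  then obtain r where r: "strict_mono r" "\<forall>i\<in>F. convergent (\<lambda>n. X (r n) i)"
    by blast
  obtain f where f: "strict_mono f" "monoseq (\<lambda>n. X (r (f n)) a)"
    using seq_monosub[of "\<lambda>n. X (r n) a"] by auto
  have "Bseq (\<lambda>n. X (r (f n)) a)"
    using bound by (intro BseqI'[of _ 1]) simp
  then have "convergent (\<lambda>n. X (r (f n)) a)"
    using f(2) Bseq_monoseq_convergent by blast
  moreover have "convergent (\<lambda>n. X (r (f n)) i)" if "i \<in> F" for i
    using convergent_subseq_convergent[OF r(2)[rule_format, OF that] f(1)] by (simp add: o_def)
  ultimately show ?case
    using strict_mono_o[OF r(1) f(1)] by (intro exI[of _ "r \<circ> f"]) (auto simp: o_def)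
qed

lemma Orth_seq_convergent_subseq:
  fixes Bs :: "nat \<Rightarrow> nat \<Rightarrow> nat \<Rightarrow> real"
  assumes Bs: "\<And>n. Bs n \<in> Orth d"
  shows "\<exists>r B. strict_mono r \<and> B \<in> Orth d \<and> (\<forall>i j. (\<lambda>n. Bs (r n) i j) \<longlonglongrightarrow> B i j)"
proof -
  obtain r where r: "strict_mono r" "\<forall>(i, j)\<in>{1..d}\<times>{1..d}. convergent (\<lambda>n. Bs (r n) i j)"
    using bounded_seq_convergent_subseq[of "{1..d}\<times>{1..d}" "\<lambda>n (i, j). Bs n i j"] Orth_abs_le_1[OF Bs]
    by fastforce
  define B where "B i j = lim (\<lambda>n. Bs (r n) i j)" for i j
  have outside: "(\<lambda>n. Bs (r n) i j) = (\<lambda>n. 0)" if "i \<notin> {1..d} \<or> j \<notin> {1..d}" for i j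
    using Orth_mat_supp[OF Bs] that by (auto simp: mat_supp_def)
  have lim: "(\<lambda>n. Bs (r n) i j) \<longlonglongrightarrow> B i j" for i j
    using r(2) outside[of i j] unfolding B_def convergent_LIMSEQ_iff[symmetric]
    by (cases "i \<in> {1..d} \<and> j \<in> {1..d}") (auto simp: convergent_const)
  have "mat_supp d B"
    using outside by (simp add: B_def mat_supp_def)
  moreover have "mat_mul d B (mat_transpose B) i j = idm d i j" for i j
  proof -
    have "(\<lambda>n. mat_mul d (Bs (r n)) (mat_transpose (Bs (r n))) i j) \<longlonglongrightarrow> mat_mul d B (mat_transpose B) i j"
      unfolding mat_mul_def mat_transpose_def by (intro tendsto_sum tendsto_mult lim)
    then show ?thesis
      using Orth_mul_transpose[OF Bs] tendsto_const_eq by simp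
  qed
  ultimately have "B \<in> Orth d"
    by (simp add: Orth_iff fun_eq_iff)
  then show ?thesis
    using r(1) lim by blast
qed

section \<open>Approximation by slice representatives\<close>

definition pt_close :: "real pt \<Rightarrow> real pt \<Rightarrow> real \<Rightarrow> bool"
  where "pt_close y x e \<longleftrightarrow> (\<forall>i. \<bar>fst y i - fst x i\<bar> < e) \<and> (\<forall>i j. \<bar>snd y i j - snd x i j\<bar> < e)"

definition pt_l1norm :: "nat \<Rightarrow> real pt \<Rightarrow> real"
  where "pt_l1norm d y = (\<Sum>i=1..d. \<bar>fst y i\<bar>) + (\<Sum>i=1..d. \<Sum>j=1..d. \<bar>snd y i j\<bar>)"

lemma pt_l1norm_bound:
  assumes y: "y \<in> Vsp d"
  shows "\<bar>fst y i\<bar> \<le> pt_l1norm d y" "\<bar>snd y i j\<bar> \<le> pt_l1norm d y"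
proof -
  have s1: "0 \<le> (\<Sum>i=1..d. \<bar>fst y i\<bar>)" and s2: "0 \<le> (\<Sum>i=1..d. \<Sum>j=1..d. \<bar>snd y i j\<bar>)"
    by (simp_all add: sum_nonneg)
  show "\<bar>fst y i\<bar> \<le> pt_l1norm d y"
  proof (cases "i \<in> {1..d}")
    case True
    then have "\<bar>fst y i\<bar> \<le> (\<Sum>i=1..d. \<bar>fst y i\<bar>)"
      by (intro member_le_sum) auto
    then show ?thesis using s2 unfolding pt_l1norm_def by linarith
  next
    case False
    then show ?thesis using Vsp_fst_eq_0[OF y False] s1 s2 by (simp add: pt_l1norm_def)
  qed
  show "\<bar>snd y i j\<bar> \<le> pt_l1norm d y"
  proof (cases "i \<in> {1..d} \<and> j \<in> {1..d}")
    case True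
    then have "\<bar>snd y i j\<bar> \<le> (\<Sum>j=1..d. \<bar>snd y i j\<bar>)"
      by (intro member_le_sum) auto
    also have "\<dots> \<le> (\<Sum>i=1..d. \<Sum>j=1..d. \<bar>snd y i j\<bar>)"
      using True by (intro member_le_sum[of _ _ "\<lambda>i. \<Sum>j=1..d. \<bar>snd y i j\<bar>"]) (auto intro: sum_nonneg)
    finally show ?thesis using s1 unfolding pt_l1norm_def by linarith
  next
    case False
    then show ?thesis using Vsp_snd_eq_0[OF y] s1 s2 by (simp add: pt_l1norm_def)
  qed
qed

lemma pt_close_line_pt:
  assumes w: "w \<in> Vsp d" and s: "0 < s" "s < e / (pt_l1norm d w + 1)"
  shows "pt_close (line_pt y w s) y e"
proof -
  have "0 \<le> pt_l1norm d w"
    using pt_l1norm_bound(1)[OF w, of 0] by linarith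
  then have "s * (pt_l1norm d w + 1) < e"
    using s by (simp add: pos_less_divide_eq)
  then have "s * \<bar>a\<bar> < e" if "\<bar>a\<bar> \<le> pt_l1norm d w" for a
  proof -
    have "s * \<bar>a\<bar> \<le> s * pt_l1norm d w"
      using that s(1) by (simp add: mult_left_mono)
    also have "\<dots> < e"
      using \<open>s * (pt_l1norm d w + 1) < e\<close> s(1) by (simp add: algebra_simps)
    finally show ?thesis .
  qed
  then show ?thesis
    unfolding pt_close_def line_pt_def using pt_l1norm_bound[OF w] s(1) by (simp add: abs_mult)
qed

lemma pt_close_line_pt_avoiding:
  assumes F: "finite F" and w: "w \<in> Vsp d" and e: "e > 0"
  obtains s where "pt_close (line_pt y w s) y e" "complex_of_real s \<notin> F"
proof -
  have "e / (pt_l1norm d w + 1) > 0"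
    using e pt_l1norm_bound(1)[OF w, of 0] by (simp add: add_nonneg_pos)
  then obtain s where "0 < s" "s < e / (pt_l1norm d w + 1)" "complex_of_real s \<notin> F"
    using real_avoiding_finite[OF F] by blast
  then show ?thesis
    using pt_close_line_pt[OF w] that by blast
qed

lemma pt_close_trans:
  assumes "pt_close a b e1" "pt_close b c e2"
  shows "pt_close a c (e1 + e2)"
  unfolding pt_close_def
proof (intro conjI allI)
  fix i j
  have "\<bar>fst a i - fst b i\<bar> < e1" "\<bar>fst b i - fst c i\<bar> < e2"
    using assms by (auto simp: pt_close_def)
  then show "\<bar>fst a i - fst c i\<bar> < e1 + e2" by arith
  have "\<bar>snd a i j - snd b i j\<bar> < e1" "\<bar>snd b i j - snd c i j\<bar> < e2"
    using assms by (auto simp: pt_close_def)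
  then show "\<bar>snd a i j - snd c i j\<bar> < e1 + e2" by arith
qed

lemma tendsto_if_abs_diff_lt:
  fixes f :: "nat \<Rightarrow> real"
  assumes "\<And>n. \<bar>f n - L\<bar> < 1 / real (Suc n)"
  shows "f \<longlonglongrightarrow> L"
proof -
  have "(\<lambda>n. f n - L) \<longlonglongrightarrow> 0"
    using assms by (intro LIMSEQ_norm_0) simp
  from tendsto_add[OF this tendsto_const[of L]] show ?thesis by simp
qed

lemma pt_tendsto_if_close: "(\<And>n. pt_close (Y n) y (1 / real (Suc n))) \<Longrightarrow> pt_tendsto Y y"
  unfolding pt_close_def pt_tendsto_def by (auto intro!: tendsto_if_abs_diff_lt)

lemma perturb_towards_nonzero:
  fixes a :: "real pt" and q :: "complex pt \<Rightarrow> complex"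
  assumes a: "a \<in> Vsp d" and q: "q \<in> polyfun" and z0: "z0 \<in> Vsp d" "q (embed z0) \<noteq> 0"
    and e: "e > 0"
  obtains s where "line_pt a (diff_pt z0 a) s \<in> Vsp d" "q (embed (line_pt a (diff_pt z0 a) s)) \<noteq> 0"
    "pt_close (line_pt a (diff_pt z0 a) s) a e"
proof -
  define u where "u = diff_pt z0 a"
  have u: "u \<in> Vsp d"
    unfolding u_def by (rule diff_pt_Vsp[OF z0(1) a])
  have "q (line_pt (embed a) (embed u) 1) \<noteq> 0"
    using z0(2) embed_line_pt[of a u 1] by (simp add: u_def)
  then have "finite {t. q (line_pt (embed a) (embed u) t) = 0}"
    by (rule polyfun_line_pt_zeros_finite[OF q])
  then obtain s where "pt_close (line_pt a u s) a e"
      "complex_of_real s \<notin> {t. q (line_pt (embed a) (embed u) t) = 0}"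
    by (rule pt_close_line_pt_avoiding[OF _ u, where e = e and y = a]) (use e in simp)
  then show ?thesis
    using that line_pt_Vsp[OF a u] by (simp add: u_def embed_line_pt)
qed

text \<open>The two conditions on \<open>z'\<close> exclude finitely many points of the segment from \<open>z\<close> to
  \<open>z\<^sub>0\<close>: the first fails at most at the zeros of a polynomial that is nonzero at \<open>z\<^sub>0\<close>, the
  second at the zeros of one that is nonzero at \<open>z\<close>.\<close>

lemma perturb_in_slice_nonzero:
  fixes z :: "real pt" and q :: "complex pt \<Rightarrow> complex"
  assumes B: "B \<in> Orth d" and z: "z \<in> Vsp d" "on_slice d k z" "q (embed (act d B z)) \<noteq> 0"
    and q: "q \<in> polyfun" and z0: "z0 \<in> Vsp d" "on_slice d k z0" "q (embed z0) \<noteq> 0"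
    and e: "e > 0"
  obtains z' where "z' \<in> Vsp d" "on_slice d k z'" "q (embed z') \<noteq> 0"
    "q (embed (act d B z')) \<noteq> 0" "pt_close (act d B z') (act d B z) e"
proof -
  define v where "v = diff_pt z0 z"
  define w where "w = act d B v"
  have v: "v \<in> Vsp d" and w: "w \<in> Vsp d"
    using diff_pt_Vsp[OF z0(1) z(1)] act_Orth_Vsp[OF B] by (simp_all add: v_def w_def)
  have "q (line_pt (embed z) (embed v) 1) \<noteq> 0"
    using z0(3) embed_line_pt[of z v 1] by (simp add: v_def)
  then have zeros_v: "finite {t. q (line_pt (embed z) (embed v) t) = 0}"
    by (rule polyfun_line_pt_zeros_finite[OF q])
  have "q (line_pt (embed (act d B z)) (embed w) 0) \<noteq> 0"
    using z(3) by simp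
  then have zeros_w: "finite {t. q (line_pt (embed (act d B z)) (embed w) t) = 0}"
    by (rule polyfun_line_pt_zeros_finite[OF q])
  obtain s where close: "pt_close (line_pt (act d B z) w s) (act d B z) e"
      and s: "complex_of_real s \<notin> {t. q (line_pt (embed z) (embed v) t) = 0}
        \<union> {t. q (line_pt (embed (act d B z)) (embed w) t) = 0}"
    by (rule pt_close_line_pt_avoiding[OF finite_UnI[OF zeros_v zeros_w] w, where e = e])
      (use e in simp)
  have B_line: "act d B (line_pt z v s) = line_pt (act d B z) w s"
    by (simp add: act_line_pt w_def)
  show ?thesis
  proof (rule that[of "line_pt z v s"])
    show "line_pt z v s \<in> Vsp d" "on_slice d k (line_pt z v s)"
      using line_pt_Vsp[OF z(1) v] on_slice_line_pt[OF z(2) on_slice_diff_pt[OF z0(2) z(2)]]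
      by (simp_all add: v_def)
    show "q (embed (line_pt z v s)) \<noteq> 0" "q (embed (act d B (line_pt z v s))) \<noteq> 0"
      using s by (simp_all add: B_line embed_line_pt)
    show "pt_close (act d B (line_pt z v s)) (act d B z) e"
      using close by (simp add: B_line)
  qed
qed

lemma slice_orbit_approx:
  fixes x :: "real pt" and q :: "complex pt \<Rightarrow> complex"
  assumes x: "x \<in> Vsp d" and d: "1 \<le> d" and q: "q \<in> polyfun"
    and z0: "z0 \<in> Vsp d" "on_slice d k z0" "q (embed z0) \<noteq> 0" and e: "e > 0"
  shows "\<exists>B z. B \<in> Orth d \<and> z \<in> Vsp d \<and> on_slice d k z \<and> q (embed z) \<noteq> 0
           \<and> q (embed (act d B z)) \<noteq> 0 \<and> pt_close (act d B z) x e"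
proof -
  obtain s where y: "line_pt x (diff_pt z0 x) s \<in> Vsp d" "q (embed (line_pt x (diff_pt z0 x) s)) \<noteq> 0"
      "pt_close (line_pt x (diff_pt z0 x) s) x (e/2)"
    using perturb_towards_nonzero[OF x q z0(1,3), of "e/2"] e by auto
  then obtain B z where B: "B \<in> Orth d" "z \<in> Vsp d" "on_slice d k z"
      "line_pt x (diff_pt z0 x) s = act d B z"
    using Vsp_orbit_meets_slice[OF _ d] by metis
  obtain z' where z': "z' \<in> Vsp d" "on_slice d k z'" "q (embed z') \<noteq> 0" "q (embed (act d B z')) \<noteq> 0"
      and close: "pt_close (act d B z') (act d B z) (e/2)"
    using perturb_in_slice_nonzero[OF B(1,2,3) _ q z0, of "e/2"] y(2) B(4) e by auto
  have "pt_close (act d B z') x e"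
    using pt_close_trans[OF close, of x "e/2"] y(3) B(4) by simp
  with B(1) z' show ?thesis
    by blast
qed

lemma slice_orbit_limit:
  fixes Bs :: "nat \<Rightarrow> nat \<Rightarrow> nat \<Rightarrow> real" and zs :: "nat \<Rightarrow> real pt"
  assumes Bs: "\<And>n. Bs n \<in> Orth d" and zs: "\<And>n. zs n \<in> Vsp d" "\<And>n. on_slice d k (zs n)"
    and lim: "pt_tendsto (\<lambda>n. act d (Bs n) (zs n)) x"
  shows "\<exists>r B z. strict_mono r \<and> B \<in> Orth d \<and> z \<in> Vsp d \<and> on_slice d k z \<and> x = act d B z
    \<and> pt_tendsto (\<lambda>n. zs (r n)) z"
proof -
  obtain r B where r: "strict_mono r" and B: "B \<in> Orth d"
      and B_lim: "\<forall>i j. (\<lambda>n. Bs (r n) i j) \<longlonglongrightarrow> B i j"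
    using Orth_seq_convergent_subseq[of Bs d] Bs by blast
  define z where "z = act d (mat_transpose B) x"
  have "pt_tendsto (\<lambda>n. act d (mat_transpose (Bs (r n))) (act d (Bs (r n)) (zs (r n)))) z"
    unfolding z_def
    by (rule pt_tendsto_act) (use B_lim pt_tendsto_subseq[OF lim r] in \<open>auto simp: mat_transpose_def\<close>)
  then have z_lim: "pt_tendsto (\<lambda>n. zs (r n)) z"
    by (simp add: act_transpose_act[OF Bs zs(1)])
  have "x \<in> Vsp d"
    by (rule pt_tendsto_Vsp[OF lim]) (rule act_Orth_Vsp[OF Bs zs(1)])
  then have "x = act d B z"
    using B by (simp add: z_def act_act Orth_mul_transpose act_idm)
  moreover have "z \<in> Vsp d"
    by (rule pt_tendsto_Vsp[OF z_lim]) (rule zs(1))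
  moreover have "on_slice d k z"
    by (rule pt_tendsto_on_slice[OF z_lim]) (rule zs(2))
  ultimately show ?thesis
    using r B z_lim by blast
qed

lemma slice_orbit_approx_seq:
  fixes x :: "real pt" and q :: "complex pt \<Rightarrow> complex"
  assumes x: "x \<in> Vsp d" and d: "1 \<le> d" and q: "q \<in> polyfun"
    and z0: "z0 \<in> Vsp d" "on_slice d k z0" "q (embed z0) \<noteq> 0"
  obtains Bs zs where "\<And>n. Bs n \<in> Orth d" "\<And>n. zs n \<in> Vsp d" "\<And>n. on_slice d k (zs n)"
    "\<And>n. q (embed (zs n)) \<noteq> 0" "\<And>n. q (embed (act d (Bs n) (zs n))) \<noteq> 0"
    "pt_tendsto (\<lambda>n. act d (Bs n) (zs n)) x"
proof -
  have "\<forall>n. \<exists>B z. B \<in> Orth d \<and> z \<in> Vsp d \<and> on_slice d k z \<and> q (embed z) \<noteq> 0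
      \<and> q (embed (act d B z)) \<noteq> 0 \<and> pt_close (act d B z) x (1 / real (Suc n))"
    using slice_orbit_approx[OF x d q z0] by simp
  then have "\<exists>Bs. \<forall>n. \<exists>z. Bs n \<in> Orth d \<and> z \<in> Vsp d \<and> on_slice d k z \<and> q (embed z) \<noteq> 0
      \<and> q (embed (act d (Bs n) z)) \<noteq> 0 \<and> pt_close (act d (Bs n) z) x (1 / real (Suc n))"
    by (rule choice)
  then obtain Bs where "\<forall>n. \<exists>z. Bs n \<in> Orth d \<and> z \<in> Vsp d \<and> on_slice d k z \<and> q (embed z) \<noteq> 0
      \<and> q (embed (act d (Bs n) z)) \<noteq> 0 \<and> pt_close (act d (Bs n) z) x (1 / real (Suc n))"
    by blast
  then have "\<exists>zs. \<forall>n. Bs n \<in> Orth d \<and> zs n \<in> Vsp d \<and> on_slice d k (zs n) \<and> q (embed (zs n)) \<noteq> 0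
      \<and> q (embed (act d (Bs n) (zs n))) \<noteq> 0 \<and> pt_close (act d (Bs n) (zs n)) x (1 / real (Suc n))"
    by (rule choice)
  then obtain zs where S: "\<forall>n. Bs n \<in> Orth d \<and> zs n \<in> Vsp d \<and> on_slice d k (zs n) \<and> q (embed (zs n)) \<noteq> 0
      \<and> q (embed (act d (Bs n) (zs n))) \<noteq> 0 \<and> pt_close (act d (Bs n) (zs n)) x (1 / real (Suc n))"
    by blast
  show ?thesis
    by (rule that[of Bs zs]) (use S in \<open>auto intro: pt_tendsto_if_close\<close>)
qed

lemma real_slice_point_nonzero:
  fixes q :: "complex pt \<Rightarrow> complex"
  assumes q: "q \<in> polyfun" and w: "w \<in> Vsp d" "on_slice d k w" "q w \<noteq> 0"
  shows "\<exists>z. z \<in> Vsp d \<and> on_slice d k z \<and> q (embed z) \<noteq> 0"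
proof -
  define a where "a = ((\<lambda>i. Re (fst w i)), (\<lambda>i j. Re (snd w i j)))"
  define b where "b = ((\<lambda>i. Im (fst w i)), (\<lambda>i j. Im (snd w i j)))"
  have w_eq: "w = line_pt (embed a) (embed b) \<i>"
    by (simp add: line_pt_def embed_def a_def b_def prod_eq_iff fun_eq_iff complex_eq_iff)
  have "a \<in> Vsp d \<and> b \<in> Vsp d"
  proof (intro conjI VspI)
    show "vec_supp d (fst a)" "vec_supp d (fst b)"
      using Vsp_vec_supp[OF w(1)] by (simp_all add: a_def b_def vec_supp_def)
    show "mat_supp d (snd a)" "mat_supp d (snd b)"
      using Vsp_mat_supp[OF w(1)] by (simp_all add: a_def b_def mat_supp_def)
    show "snd a i j = - snd a j i" "snd b i j = - snd b j i" for i j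
      using Vsp_skew[OF w(1), of i j] by (simp_all add: a_def b_def)
  qed
  moreover have "on_slice d k a" "on_slice d k b"
    using w(2) by (simp_all add: on_slice_def a_def b_def)
  moreover have "finite {t. q (line_pt (embed a) (embed b) t) = 0}"
    using w(3) w_eq by (intro polyfun_line_pt_zeros_finite[OF q]) simp
  then obtain s where "complex_of_real s \<notin> {t. q (line_pt (embed a) (embed b) t) = 0}"
    using real_avoiding_finite[of _ 1] by auto
  ultimately show ?thesis
    by (intro exI[of _ "line_pt a b s"]) (simp add: line_pt_Vsp on_slice_line_pt embed_line_pt)
qed

lemma act_embed: "act d (\<lambda>i j. complex_of_real (B i j)) (embed z) = embed (act d B z)"
  by (simp add: act_def embed_def)

lemma Orth_of_real: "B \<in> Orth d \<Longrightarrow> (\<lambda>i j. complex_of_real (B i j)) \<in> Orth d"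
  unfolding Orth_def by (auto simp flip: of_real_mult of_real_sum)

lemma invariant_restriction_eq:
  fixes p q p' q' :: "'a::idom pt \<Rightarrow> 'a"
  assumes equiv: "ratequiv d p q p' q'" and inv: "invariant d p' q'"
    and restr: "\<forall>y\<in>S. p' y = g y * q' y"
    and A: "A \<in> Orth d" and z: "z \<in> Vsp d" "z \<in> S" "q' z \<noteq> 0" "q' (act d A z) \<noteq> 0"
  shows "p (act d A z) = g z * q (act d A z)"
proof -
  have "p' (act d A z) * q' z = (g z * q' (act d A z)) * q' z"
    using inv A z(1) restr z(2) by (simp add: invariant_def mult_ac)
  then have p'_Az: "p' (act d A z) = g z * q' (act d A z)"
    using z(3) by simp
  have "p (act d A z) * q' (act d A z) = p' (act d A z) * q (act d A z)"
    using equiv act_Orth_Vsp[OF A z(1)] by (simp add: ratequiv_def)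
  then have "p (act d A z) * q' (act d A z) = (g z * q (act d A z)) * q' (act d A z)"
    by (simp add: p'_Az mult_ac)
  then show ?thesis
    using z(4) by simp
qed

lemma polyfun_sum: "finite S \<Longrightarrow> (\<And>k. k \<in> S \<Longrightarrow> f k \<in> polyfun) \<Longrightarrow> (\<lambda>x. \<Sum>k\<in>S. f k x) \<in> polyfun"
proof (induction S rule: finite_induct)
  case empty
  then show ?case using polyfun.pconst[of 0] by simp
next
  case (insert a S)
  then show ?case using polyfun.padd[of "f a" "\<lambda>x. \<Sum>k\<in>S. f k x"] by simp
qed

lemma gfun_polyfun: "gfun d i \<in> polyfun"
proof -
  have "(\<lambda>x::complex pt. (fst x k)\<^sup>2) \<in> polyfun" "(\<lambda>x::complex pt. (snd x k l)\<^sup>2) \<in> polyfun" for k l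
    unfolding power2_eq_square by (intro polyfun.pmult polyfun.pvc polyfun.pmc)+
  then have "(\<lambda>x::complex pt. \<Sum>k=1..d. (fst x k)\<^sup>2) \<in> polyfun"
      "(\<lambda>x::complex pt. \<Sum>k=1..d-i+1. (snd x k (d-i+2))\<^sup>2) \<in> polyfun"
    by (intro polyfun_sum finite_atLeastAtMost; blast)+
  then show ?thesis
    unfolding gfun_def by (cases "i = 1") (simp_all only: if_True if_False simp_thms)
qed

lemma gfun_1_embed: "gfun d 1 (embed x) = complex_of_real (\<Sum>i=1..d. (fst x i)\<^sup>2)"
  by (simp add: gfun_def embed_def)

lemma gfun_Suc_embed:
  assumes "k \<in> {1..d-1}"
  shows "gfun d (Suc k) (embed z) = complex_of_real (col_sq_above (d+1-k) z)"
proof -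
  have "d - Suc k + 1 = d + 1 - k - 1" "d - Suc k + 2 = d + 1 - k" "Suc k \<noteq> 1"
    using assms by auto
  then show ?thesis
    unfolding gfun_def col_sq_above_def by (simp add: embed_def)
qed

section \<open>The invariant functions at points of \<open>U\<^sub>d(\<real>)\<close>\<close>

text \<open>If a representative \<open>p/q\<close> of \<open>f\<^sub>k\<^sub>+\<^sub>1\<close> is defined and nonzero at \<open>x\<close>, the identity
  \<open>p (B z) = g(z) q (B z)\<close> holds at approximating points \<open>B z\<close> with \<open>z\<close> in the slice, and by
  compactness of \<open>O\<^sub>d(\<real>)\<close> it survives the passage to a limit representative of \<open>x\<close>.\<close>

lemma frep_Suc_unfold:
  assumes k: "k \<in> {1..d-1}" and pq: "(p, q) \<in> frep d (Suc k)"
  obtains p' q' z0 where "ratequiv d p q p' q'" "invariant d p' q'" "q' \<in> polyfun"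
    "\<forall>y. y \<in> Vsp d \<and> on_slice d k y \<longrightarrow> p' y = gfun d (Suc k) y * q' y"
    "z0 \<in> Vsp d" "on_slice d k z0" "q' (embed z0) \<noteq> 0"
proof -
  obtain p' q' where p'q': "ratrep d p' q'" "ratequiv d p q p' q'" "invariant d p' q'"
      "restricts_to (Lsl d k) p' q' (gfun d (Suc k))"
    using pq k unfolding frep_def by auto
  have L: "Lsl d k = {y \<in> Vsp d. on_slice d k y}"
    using k by (simp add: Lsl_eq)
  have q': "q' \<in> polyfun"
    using p'q'(1) by (simp add: ratrep_def)
  obtain w where "w \<in> Vsp d" "on_slice d k w" "q' w \<noteq> 0"
    using p'q'(4) L by (auto simp: restricts_to_def nonzero_on_def)
  then obtain z0 where "z0 \<in> Vsp d" "on_slice d k z0" "q' (embed z0) \<noteq> 0"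
    using real_slice_point_nonzero[OF q'] by blast
  then show ?thesis
    using that[OF p'q'(2,3) q'] p'q'(4) L by (auto simp: restricts_to_def)
qed

lemma frep_nonzero_imp_slice_rep:
  fixes x :: "real pt"
  assumes x: "x \<in> Vsp d" and k: "k \<in> {1..d-1}"
    and pq: "(p, q) \<in> frep d (Suc k)" "p (embed x) \<noteq> 0"
  shows "nonvanishing_slice_rep d k x"
proof -
  obtain p' q' z0 where p'q': "ratequiv d p q p' q'" "invariant d p' q'" and q': "q' \<in> polyfun"
      and restr: "\<forall>y. y \<in> Vsp d \<and> on_slice d k y \<longrightarrow> p' y = gfun d (Suc k) y * q' y"
      and z0: "z0 \<in> Vsp d" "on_slice d k z0" "q' (embed z0) \<noteq> 0"
    using frep_Suc_unfold[OF k pq(1)] by blast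
  have rep: "ratrep d p q"
    using pq(1) by (simp add: frep_def)
  have d: "1 \<le> d"
    using k by auto
  obtain Bs zs where Bs: "\<And>n. Bs n \<in> Orth d" and zs: "\<And>n. zs n \<in> Vsp d" "\<And>n. on_slice d k (zs n)"
      and q'_ne: "\<And>n. q' (embed (zs n)) \<noteq> 0" "\<And>n. q' (embed (act d (Bs n) (zs n))) \<noteq> 0"
      and lim: "pt_tendsto (\<lambda>n. act d (Bs n) (zs n)) x"
    using slice_orbit_approx_seq[OF x d q' z0] by auto
  have eq: "p (embed (act d (Bs n) (zs n))) = gfun d (Suc k) (embed (zs n)) * q (embed (act d (Bs n) (zs n)))"
    for n
    using invariant_restriction_eq[OF p'q', of "{y \<in> Vsp d. on_slice d k y}" "gfun d (Suc k)",
        OF _ Orth_of_real[OF Bs], of "embed (zs n)"] restr q'_ne[of n] zs[of n]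
    by (simp add: act_embed embed_Vsp on_slice_embed)
  obtain r B z where r: "strict_mono r" and z: "B \<in> Orth d" "z \<in> Vsp d" "on_slice d k z" "x = act d B z"
      and z_lim: "pt_tendsto (\<lambda>n. zs (r n)) z"
    using slice_orbit_limit[OF Bs zs lim] by blast
  have x_lim: "pt_tendsto (\<lambda>n. embed (act d (Bs (r n)) (zs (r n)))) (embed x)"
    by (rule pt_tendsto_embed[OF pt_tendsto_subseq[OF lim r]])
  have "(\<lambda>n. p (embed (act d (Bs (r n)) (zs (r n))))) \<longlonglongrightarrow> p (embed x)"
    using rep by (intro polyfun_tendsto[OF _ x_lim]) (simp add: ratrep_def)
  moreover have "(\<lambda>n. p (embed (act d (Bs (r n)) (zs (r n)))))
      \<longlonglongrightarrow> gfun d (Suc k) (embed z) * q (embed x)"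
    unfolding eq using rep
    by (intro tendsto_mult polyfun_tendsto[OF gfun_polyfun pt_tendsto_embed[OF z_lim]]
        polyfun_tendsto[OF _ x_lim]) (simp add: ratrep_def)
  ultimately have "p (embed x) = gfun d (Suc k) (embed z) * q (embed x)"
    by (rule LIMSEQ_unique)
  then have "col_sq_above (d+1-k) z \<noteq> 0"
    using pq(2) gfun_Suc_embed[OF k] by auto
  then show ?thesis
    using z unfolding nonvanishing_slice_rep_def by blast
qed

theorem corollary3p13:
  fixes d :: nat and A :: "nat \<Rightarrow> nat \<Rightarrow> real" and x :: "real pt"
  assumes "d \<ge> 2" and "x \<in> Ure d" and "A \<in> Orth d" and "act d A x = x"
  shows "A = idm d"
proof -
  have U: "embed x \<in> Vsp d" "\<forall>k\<in>{1..d}. \<exists>(p, q)\<in>frep d k. q (embed x) \<noteq> 0 \<and> p (embed x) \<noteq> 0"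
    using assms(2) by (auto simp: Ure_def Ucx_def)
  then have x: "x \<in> Vsp d"
    by (simp add: embed_Vsp)
  obtain p q where "(p, q) \<in> frep d 1" "p (embed x) \<noteq> 0"
    using U(2) assms(1) by fastforce
  then have "gfun d 1 (embed x) \<noteq> 0"
    using U(1) by (auto simp: frep_def ratequiv_def)
  then have "(\<Sum>i=1..d. (fst x i)\<^sup>2) \<noteq> 0"
    using gfun_1_embed[of d x] by (metis of_real_0)
  moreover have "nonvanishing_slice_rep d k x" if k: "k \<in> {1..d-1}" for k
  proof -
    obtain p q where "(p, q) \<in> frep d (Suc k)" "p (embed x) \<noteq> 0"
      using U(2) k by fastforce
    then show ?thesis
      by (rule frep_nonzero_imp_slice_rep[OF x k])
  qed
  ultimately show ?thesis
    using Orth_stabilizer_trivial_if_reps[OF assms(1)] assms(3,4) by blast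
qed

end
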